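(* At a point of a framework, consider a tensor derivation $M(\cdot)$ acting on spinors by a matrix $M^\alpha_\beta$ and on vectors by a matrix $M^i_j$, so that $$M(\cdot)\bigl(T^\alpha_{i\beta}\bigr)=M^\alpha_\lambda T^\lambda_{i\beta}-T^\alpha_{i\lambda}M^\lambda_\beta-M^k_iT^\alpha_{k\beta}.$$ Then $M(\cdot)(T^\alpha_{i\beta})=0$ for all $i,\alpha,\beta$ if and only if there exist a scalar $a$ and a vector $b^k$ with $$M^\alpha_\beta=a\,1^\alpha_\beta+b^kT^\alpha_{k\beta},\qquad M^i_j=b^kT^i_{kj}.$$
   Context: Framework (pointwise data). $V$ is a real 4-dimensional vector space ("spinors") with Greek indices; lowercase Latin indices index a 10-dimensional real vector space (the tangent space); summation convention. $T^k_{ij}$ are structure constants making the tangent space a Lie algebra isomorphic to $\mathfrak{so}(2,3)\cong\mathfrak{sp}(4,\mathbb R)$, and $T^\alpha_{i\beta}$ are matrices with $T^\alpha_{i\lambda}T^\lambda_{j\beta}-T^\alpha_{j\lambda}T^\lambda_{i\beta}=T^k_{ij}T^\alpha_{k\beta}$ giving the 4-dimensional irreducible real representation of this Lie algebra on $V$. $1^\alpha_\beta$ is the identity on $V$. *)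

theory Defs
  imports "HOL-Analysis.Analysis"
begin

text \<open>Index conventions: spinor indices range over the 4-element type 4,
  tangent (vector) indices over the 10-element type 10.
  Ts alpha i beta stands for T^alpha_{i beta}; Tv k i j stands for T^k_{ij}.\<close>

definition eta23 :: "5 \<Rightarrow> 5 \<Rightarrow> real" where
  "eta23 a b = (if a = b then (if a = 0 \<or> a = 1 then 1 else -1) else 0)"

definition in_so23 :: "(5 \<Rightarrow> 5 \<Rightarrow> real) \<Rightarrow> bool" where
  "in_so23 X \<longleftrightarrow> (\<forall>a b. (\<Sum>c\<in>UNIV. X c a * eta23 c b) + (\<Sum>c\<in>UNIV. eta23 a c * X c b) = 0)"

definition mat5_mult :: "(5 \<Rightarrow> 5 \<Rightarrow> real) \<Rightarrow> (5 \<Rightarrow> 5 \<Rightarrow> real) \<Rightarrow> (5 \<Rightarrow> 5 \<Rightarrow> real)" where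
  "mat5_mult X Y = (\<lambda>a b. \<Sum>c\<in>UNIV. X a c * Y c b)"

text \<open>The structure constants Tv make the 10-dimensional tangent space a Lie algebra
  isomorphic to so(2,3): there is a basis E of so(2,3) (10 linearly independent elements
  of the 10-dimensional so(2,3)) with [E_i, E_j] = Tv^k_{ij} E_k, i.e. the linear map
  e_i |-> E_i is a Lie algebra isomorphism.\<close>
definition so23_structure_constants :: "(10 \<Rightarrow> 10 \<Rightarrow> 10 \<Rightarrow> real) \<Rightarrow> bool" where
  "so23_structure_constants Tv \<longleftrightarrow>
     (\<exists>E :: 10 \<Rightarrow> 5 \<Rightarrow> 5 \<Rightarrow> real.
        (\<forall>i. in_so23 (E i)) \<and>
        (\<forall>c :: 10 \<Rightarrow> real. (\<forall>a b. (\<Sum>i\<in>UNIV. c i * E i a b) = 0) \<longrightarrow> (\<forall>i. c i = 0)) \<and>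
        (\<forall>i j a b. mat5_mult (E i) (E j) a b - mat5_mult (E j) (E i) a b
                     = (\<Sum>k\<in>UNIV. Tv k i j * E k a b)))"

definition spin_act :: "(4 \<Rightarrow> 10 \<Rightarrow> 4 \<Rightarrow> real) \<Rightarrow> 10 \<Rightarrow> real^4 \<Rightarrow> real^4" where
  "spin_act Ts i v = (\<chi> a. \<Sum>b\<in>UNIV. Ts a i b * v $ b)"

definition is_rep :: "(10 \<Rightarrow> 10 \<Rightarrow> 10 \<Rightarrow> real) \<Rightarrow> (4 \<Rightarrow> 10 \<Rightarrow> 4 \<Rightarrow> real) \<Rightarrow> bool" where
  "is_rep Tv Ts \<longleftrightarrow> (\<forall>i j a b.
     (\<Sum>l\<in>UNIV. Ts a i l * Ts l j b) - (\<Sum>l\<in>UNIV. Ts a j l * Ts l i b)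
       = (\<Sum>k\<in>UNIV. Tv k i j * Ts a k b))"

definition irreducible_rep :: "(4 \<Rightarrow> 10 \<Rightarrow> 4 \<Rightarrow> real) \<Rightarrow> bool" where
  "irreducible_rep Ts \<longleftrightarrow> (\<forall>W :: (real^4) set.
     subspace W \<longrightarrow> (\<forall>i. \<forall>v\<in>W. spin_act Ts i v \<in> W) \<longrightarrow> W = {0} \<or> W = UNIV)"

definition Mder :: "(4 \<Rightarrow> 4 \<Rightarrow> real) \<Rightarrow> (10 \<Rightarrow> 10 \<Rightarrow> real) \<Rightarrow> (4 \<Rightarrow> 10 \<Rightarrow> 4 \<Rightarrow> real)
                    \<Rightarrow> 4 \<Rightarrow> 10 \<Rightarrow> 4 \<Rightarrow> real" where
  "Mder Ms Mv Ts a i b =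
     (\<Sum>l\<in>UNIV. Ms a l * Ts l i b) - (\<Sum>l\<in>UNIV. Ts a i l * Ms l b)
     - (\<Sum>k\<in>UNIV. Mv k i * Ts a k b)"

end

theory Submission
  imports Defs "Jordan_Normal_Form.Spectral_Radius"
begin

text \<open>If $M(\cdot)$ annihilates $T^\alpha_{i\beta}$, then, transported through the spinor
  representation $\rho$, the vector part $D = (M^i_j)$ satisfies $\rho(Dx) = [M, \rho(x)]$, so $D$
  is a derivation of the Lie algebra. Since so(2,3) is simple, its Killing form is nondegenerate
  and it is perfect, so every derivation is inner: $D = \mathrm{ad}\,b$. Then $M - \rho(b)$
  commutes with the irreducible representation, and Schur's lemma makes it a real scalar: a
  commuting complex structure would make the faithful representation complex linear on
  $\mathbb{C}^2$, embedding the 10-dimensional algebra into $\mathbb{R}^8$.\<close>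

section \<open>Square matrices as functions\<close>

definition fmat_mult :: "('n::finite \<Rightarrow> 'n \<Rightarrow> real) \<Rightarrow> ('n \<Rightarrow> 'n \<Rightarrow> real) \<Rightarrow> 'n \<Rightarrow> 'n \<Rightarrow> real"
  where "fmat_mult X Y = (\<lambda>a b. \<Sum>c\<in>UNIV. X a c * Y c b)"

definition fmat_bracket :: "('n::finite \<Rightarrow> 'n \<Rightarrow> real) \<Rightarrow> ('n \<Rightarrow> 'n \<Rightarrow> real) \<Rightarrow> 'n \<Rightarrow> 'n \<Rightarrow> real"
  where "fmat_bracket X Y = (\<lambda>a b. fmat_mult X Y a b - fmat_mult Y X a b)"

definition fmat_scalar :: "real \<Rightarrow> 'n \<Rightarrow> 'n \<Rightarrow> real"
  where "fmat_scalar c = (\<lambda>a b. c * (if a = b then 1 else 0))"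

definition fmat_apply :: "('n::finite \<Rightarrow> 'n \<Rightarrow> real) \<Rightarrow> real^'n \<Rightarrow> real^'n"
  where "fmat_apply A v = (\<chi> a. \<Sum>b\<in>UNIV. A a b * v $ b)"

definition fmat_comb :: "('i::finite \<Rightarrow> 'n \<Rightarrow> 'n \<Rightarrow> real) \<Rightarrow> real^'i \<Rightarrow> 'n \<Rightarrow> 'n \<Rightarrow> real"
  where "fmat_comb A x = (\<lambda>a b. \<Sum>i\<in>UNIV. x $ i * A i a b)"

lemma mult_if_zero_right: "x * (if P then y else 0) = (if P then x * y else (0::real))"
  by simp

lemma mult_if_zero_left: "(if P then y else 0) * x = (if P then y * x else (0::real))"
  by simp

lemma fmat_mult_assoc: "fmat_mult (fmat_mult X Y) Z = fmat_mult X (fmat_mult Y Z)"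
proof (intro ext)
  fix a b
  have "fmat_mult (fmat_mult X Y) Z a b = (\<Sum>c\<in>UNIV. \<Sum>e\<in>UNIV. X a e * Y e c * Z c b)"
    unfolding fmat_mult_def by (simp add: sum_distrib_right)
  also have "\<dots> = (\<Sum>e\<in>UNIV. \<Sum>c\<in>UNIV. X a e * Y e c * Z c b)"
    by (rule sum.swap)
  also have "\<dots> = fmat_mult X (fmat_mult Y Z) a b"
    unfolding fmat_mult_def by (simp add: sum_distrib_left mult.assoc)
  finally show "fmat_mult (fmat_mult X Y) Z a b = fmat_mult X (fmat_mult Y Z) a b" .
qed

lemma fmat_mult_diff_left:
  "fmat_mult (\<lambda>a b. X a b - Y a b) Z = (\<lambda>a b. fmat_mult X Z a b - fmat_mult Y Z a b)"
  unfolding fmat_mult_def by (intro ext) (simp add: left_diff_distrib sum_subtractf)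

lemma fmat_mult_diff_right:
  "fmat_mult Z (\<lambda>a b. X a b - Y a b) = (\<lambda>a b. fmat_mult Z X a b - fmat_mult Z Y a b)"
  unfolding fmat_mult_def by (intro ext) (simp add: right_diff_distrib sum_subtractf)

lemma fmat_bracket_jacobi:
  "fmat_bracket (fmat_bracket X Y) W
     = (\<lambda>a b. fmat_bracket X (fmat_bracket Y W) a b - fmat_bracket Y (fmat_bracket X W) a b)"
  unfolding fmat_bracket_def fmat_mult_diff_left fmat_mult_diff_right fmat_mult_assoc
  by (intro ext) simp

lemma fmat_bracket_derivation:
  "fmat_bracket M (fmat_bracket X Y)
     = (\<lambda>a b. fmat_bracket (fmat_bracket M X) Y a b + fmat_bracket X (fmat_bracket M Y) a b)"
  using fmat_bracket_jacobi[of M X Y] by (simp add: fun_eq_iff)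

lemma fmat_bracket_plus_left:
  "fmat_bracket (\<lambda>a b. A a b + B a b) X = (\<lambda>a b. fmat_bracket A X a b + fmat_bracket B X a b)"
  unfolding fmat_bracket_def fmat_mult_def
  by (intro ext) (simp add: distrib_left distrib_right sum.distrib)

lemma fmat_bracket_diff_left:
  "fmat_bracket (\<lambda>a b. A a b - B a b) X = (\<lambda>a b. fmat_bracket A X a b - fmat_bracket B X a b)"
  unfolding fmat_bracket_def fmat_mult_diff_left fmat_mult_diff_right by (intro ext) simp

lemma fmat_bracket_scalar_left: "fmat_bracket (fmat_scalar c) X = (\<lambda>a b. 0)"
  unfolding fmat_bracket_def fmat_mult_def fmat_scalar_def
  by (intro ext) (simp add: mult_if_zero_left mult_if_zero_right sum.delta)

lemma fmat_bracket_antisym: "fmat_bracket Y Z = (\<lambda>a b. -1 * fmat_bracket Z Y a b)"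
  unfolding fmat_bracket_def by (intro ext) simp

lemma fmat_mult_comb_left:
  "fmat_mult (fmat_comb B x) A = (\<lambda>a b. \<Sum>i\<in>UNIV. x $ i * fmat_mult (B i) A a b)"
proof (intro ext)
  fix a b
  have "fmat_mult (fmat_comb B x) A a b = (\<Sum>c\<in>UNIV. \<Sum>i\<in>UNIV. x $ i * (B i a c * A c b))"
    unfolding fmat_mult_def fmat_comb_def by (simp add: sum_distrib_left sum_distrib_right algebra_simps)
  also have "\<dots> = (\<Sum>i\<in>UNIV. \<Sum>c\<in>UNIV. x $ i * (B i a c * A c b))"
    by (rule sum.swap)
  finally show "fmat_mult (fmat_comb B x) A a b = (\<Sum>i\<in>UNIV. x $ i * fmat_mult (B i) A a b)"
    unfolding fmat_mult_def by (simp add: sum_distrib_left)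
qed

lemma fmat_mult_comb_right:
  "fmat_mult A (fmat_comb B x) = (\<lambda>a b. \<Sum>i\<in>UNIV. x $ i * fmat_mult A (B i) a b)"
proof (intro ext)
  fix a b
  have "fmat_mult A (fmat_comb B x) a b = (\<Sum>c\<in>UNIV. \<Sum>i\<in>UNIV. x $ i * (A a c * B i c b))"
    unfolding fmat_mult_def fmat_comb_def by (simp add: sum_distrib_left algebra_simps)
  also have "\<dots> = (\<Sum>i\<in>UNIV. \<Sum>c\<in>UNIV. x $ i * (A a c * B i c b))"
    by (rule sum.swap)
  finally show "fmat_mult A (fmat_comb B x) a b = (\<Sum>i\<in>UNIV. x $ i * fmat_mult A (B i) a b)"
    unfolding fmat_mult_def by (simp add: sum_distrib_left)
qed

lemma fmat_bracket_comb_left: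
  "fmat_bracket (fmat_comb B x) A = (\<lambda>a b. \<Sum>i\<in>UNIV. x $ i * fmat_bracket (B i) A a b)"
  unfolding fmat_bracket_def fmat_mult_comb_left fmat_mult_comb_right
  by (simp add: right_diff_distrib sum_subtractf)

lemma fmat_bracket_comb_right:
  "fmat_bracket A (fmat_comb B x) = (\<lambda>a b. \<Sum>i\<in>UNIV. x $ i * fmat_bracket A (B i) a b)"
  unfolding fmat_bracket_def fmat_mult_comb_left fmat_mult_comb_right
  by (simp add: right_diff_distrib sum_subtractf)

lemma fmat_comb_add: "fmat_comb A (x + y) = (\<lambda>a b. fmat_comb A x a b + fmat_comb A y a b)"
  unfolding fmat_comb_def by (intro ext) (simp add: distrib_right sum.distrib)

lemma fmat_comb_scale: "fmat_comb A (c *\<^sub>R x) = (\<lambda>a b. c * fmat_comb A x a b)"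
  unfolding fmat_comb_def by (intro ext) (simp add: sum_distrib_left mult.assoc)

lemma fmat_comb_diff: "fmat_comb A (x - y) = (\<lambda>a b. fmat_comb A x a b - fmat_comb A y a b)"
  unfolding fmat_comb_def by (intro ext) (simp add: left_diff_distrib sum_subtractf)

lemma fmat_comb_zero [simp]: "fmat_comb A 0 = (\<lambda>a b. 0)"
  unfolding fmat_comb_def by simp

lemma fmat_comb_axis: "fmat_comb A (axis i 1) = A i"
  unfolding fmat_comb_def by (intro ext) (simp add: axis_def mult_if_zero_left sum.delta)

lemma fmat_comb_sum: "finite S \<Longrightarrow> fmat_comb A (\<Sum>s\<in>S. f s) a b = (\<Sum>s\<in>S. fmat_comb A (f s) a b)"
  by (induction S rule: finite_induct) (simp_all add: fmat_comb_add)

lemma fmat_apply_mult: "fmat_apply (fmat_mult A B) v = fmat_apply A (fmat_apply B v)"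
proof -
  have "(\<Sum>b\<in>UNIV. (\<Sum>c\<in>UNIV. A a c * B c b) * v $ b) = (\<Sum>c\<in>UNIV. A a c * (\<Sum>b\<in>UNIV. B c b * v $ b))"
    for a
  proof -
    have "(\<Sum>b\<in>UNIV. (\<Sum>c\<in>UNIV. A a c * B c b) * v $ b) = (\<Sum>b\<in>UNIV. \<Sum>c\<in>UNIV. A a c * B c b * v $ b)"
      by (simp add: sum_distrib_right)
    also have "\<dots> = (\<Sum>c\<in>UNIV. \<Sum>b\<in>UNIV. A a c * B c b * v $ b)"
      by (rule sum.swap)
    finally show ?thesis by (simp add: sum_distrib_left mult.assoc)
  qed
  then show ?thesis unfolding fmat_apply_def fmat_mult_def by simp
qed

lemma linear_fmat_apply: "linear (fmat_apply A)"
  by (rule linearI)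
    (simp_all add: fmat_apply_def Finite_Cartesian_Product.vec_eq_iff algebra_simps sum.distrib sum_distrib_left)

lemmas fmat_apply_add = linear_add[OF linear_fmat_apply]
lemmas fmat_apply_diff = linear_diff[OF linear_fmat_apply]
lemmas fmat_apply_scale = linear_scale[OF linear_fmat_apply]
lemmas fmat_apply_zero [simp] = linear_0[OF linear_fmat_apply]

lemma fmat_apply_zero_mat [simp]: "fmat_apply (\<lambda>a b. 0) v = 0"
  by (simp add: fmat_apply_def Finite_Cartesian_Product.vec_eq_iff)

lemma fmat_apply_axis: "fmat_apply A (axis b 1) $ a = A a b"
  unfolding fmat_apply_def by (simp add: axis_def mult_if_zero_right sum.delta)

lemma fmat_eqI: "(\<And>v. fmat_apply A v = fmat_apply B v) \<Longrightarrow> A = B"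
  by (intro ext) (metis fmat_apply_axis)

lemma fmat_apply_plus: "fmat_apply (\<lambda>a b. A a b + B a b) w = fmat_apply A w + fmat_apply B w"
  unfolding fmat_apply_def by (simp add: Finite_Cartesian_Product.vec_eq_iff distrib_right sum.distrib)

lemma fmat_apply_minus: "fmat_apply (\<lambda>a b. A a b - B a b) w = fmat_apply A w - fmat_apply B w"
  unfolding fmat_apply_def by (simp add: Finite_Cartesian_Product.vec_eq_iff left_diff_distrib sum_subtractf)

lemma fmat_apply_times: "fmat_apply (\<lambda>a b. c * A a b) w = c *\<^sub>R fmat_apply A w"
  unfolding fmat_apply_def by (simp add: Finite_Cartesian_Product.vec_eq_iff sum_distrib_left mult.assoc)

lemma fmat_apply_scalar: "fmat_apply (fmat_scalar c) w = c *\<^sub>R w"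
  unfolding fmat_apply_def fmat_scalar_def
  by (simp add: Finite_Cartesian_Product.vec_eq_iff mult_if_zero_left mult_if_zero_right sum.delta mult.assoc)

lemma fmat_apply_comb: "fmat_apply (fmat_comb A x) w = (\<Sum>i\<in>UNIV. x $ i *\<^sub>R fmat_apply (A i) w)"
proof -
  have "(\<Sum>b\<in>UNIV. (\<Sum>i\<in>UNIV. x $ i * A i a b) * w $ b) = (\<Sum>i\<in>UNIV. x $ i * (\<Sum>b\<in>UNIV. A i a b * w $ b))"
    for a
  proof -
    have "(\<Sum>b\<in>UNIV. (\<Sum>i\<in>UNIV. x $ i * A i a b) * w $ b) = (\<Sum>b\<in>UNIV. \<Sum>i\<in>UNIV. x $ i * A i a b * w $ b)"
      by (simp add: sum_distrib_right)
    also have "\<dots> = (\<Sum>i\<in>UNIV. \<Sum>b\<in>UNIV. x $ i * A i a b * w $ b)"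
      by (rule sum.swap)
    finally show ?thesis by (simp add: sum_distrib_left mult.assoc)
  qed
  then show ?thesis unfolding fmat_apply_def fmat_comb_def by (simp add: Finite_Cartesian_Product.vec_eq_iff sum_component)
qed

lemma fmat_commute_iff_apply:
  "fmat_mult N A = fmat_mult A N \<longleftrightarrow> (\<forall>w. fmat_apply N (fmat_apply A w) = fmat_apply A (fmat_apply N w))"
  by (metis fmat_apply_mult fmat_eqI)

section \<open>Lie algebras given by structure constants\<close>

definition ad_mat :: "('i::finite \<Rightarrow> 'i \<Rightarrow> 'i \<Rightarrow> real) \<Rightarrow> real^'i \<Rightarrow> real^'i^'i"
  where "ad_mat C x = (\<chi> k j. \<Sum>i\<in>UNIV. x $ i * C k i j)"

definition lie_bracket :: "('i::finite \<Rightarrow> 'i \<Rightarrow> 'i \<Rightarrow> real) \<Rightarrow> real^'i \<Rightarrow> real^'i \<Rightarrow> real^'i"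
  where "lie_bracket C x y = ad_mat C x *v y"

definition killing :: "('i::finite \<Rightarrow> 'i \<Rightarrow> 'i \<Rightarrow> real) \<Rightarrow> real^'i \<Rightarrow> real^'i \<Rightarrow> real"
  where "killing C x y = trace (ad_mat C x ** ad_mat C y)"

definition represents :: "('i::finite \<Rightarrow> 'i \<Rightarrow> 'i \<Rightarrow> real) \<Rightarrow> ('i \<Rightarrow> 'n::finite \<Rightarrow> 'n \<Rightarrow> real) \<Rightarrow> bool"
  where "represents C A \<longleftrightarrow>
    (\<forall>i j a b. fmat_bracket (A i) (A j) a b = (\<Sum>k\<in>UNIV. C k i j * A k a b))"

lemma lie_bracket_component: "lie_bracket C x y $ k = (\<Sum>i\<in>UNIV. \<Sum>j\<in>UNIV. x $ i * y $ j * C k i j)"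
proof -
  have "lie_bracket C x y $ k = (\<Sum>j\<in>UNIV. \<Sum>i\<in>UNIV. x $ i * y $ j * C k i j)"
    unfolding lie_bracket_def ad_mat_def matrix_vector_mult_def
    by (simp add: sum_distrib_left sum_distrib_right algebra_simps)
  also have "\<dots> = (\<Sum>i\<in>UNIV. \<Sum>j\<in>UNIV. x $ i * y $ j * C k i j)"
    by (rule sum.swap)
  finally show ?thesis .
qed

lemma fmat_comb_lie_bracket:
  assumes "represents C A"
  shows "fmat_comb A (lie_bracket C x y) = fmat_bracket (fmat_comb A x) (fmat_comb A y)"
proof (intro ext)
  fix a b
  have "fmat_bracket (fmat_comb A x) (fmat_comb A y) a b
      = (\<Sum>i\<in>UNIV. \<Sum>j\<in>UNIV. \<Sum>k\<in>UNIV. x $ i * y $ j * C k i j * A k a b)"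
    using assms unfolding represents_def fmat_bracket_comb_left
    by (simp add: fmat_bracket_comb_right sum_distrib_left mult.assoc)
  also have "\<dots> = (\<Sum>i\<in>UNIV. \<Sum>k\<in>UNIV. \<Sum>j\<in>UNIV. x $ i * y $ j * C k i j * A k a b)"
    by (intro sum.cong refl sum.swap)
  also have "\<dots> = (\<Sum>k\<in>UNIV. \<Sum>i\<in>UNIV. \<Sum>j\<in>UNIV. x $ i * y $ j * C k i j * A k a b)"
    by (rule sum.swap)
  also have "\<dots> = fmat_comb A (lie_bracket C x y) a b"
    unfolding fmat_comb_def lie_bracket_component by (simp add: sum_distrib_right)
  finally show "fmat_comb A (lie_bracket C x y) a b = fmat_bracket (fmat_comb A x) (fmat_comb A y) a b"
    by simp
qed

lemma ad_mat_add: "ad_mat C (x + y) = ad_mat C x + ad_mat C y"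
  unfolding ad_mat_def by (simp add: Finite_Cartesian_Product.vec_eq_iff distrib_right sum.distrib)

lemma ad_mat_scale: "ad_mat C (c *\<^sub>R x) = c *\<^sub>R ad_mat C x"
  unfolding ad_mat_def by (simp add: Finite_Cartesian_Product.vec_eq_iff sum_distrib_left mult.assoc)

lemma ad_mat_diff: "ad_mat C (x - y) = ad_mat C x - ad_mat C y"
  unfolding ad_mat_def by (simp add: Finite_Cartesian_Product.vec_eq_iff left_diff_distrib sum_subtractf)

lemma matrix_diff_rdistrib: "((A::real^'n^'n) - B) ** C = A ** C - B ** C"
  by (simp add: matrix_matrix_mult_def Finite_Cartesian_Product.vec_eq_iff left_diff_distrib sum_subtractf)

lemma matrix_diff_ldistrib: "(C::real^'n^'n) ** (A - B) = C ** A - C ** B"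
  by (simp add: matrix_matrix_mult_def Finite_Cartesian_Product.vec_eq_iff right_diff_distrib sum_subtractf)

lemma matrix_add_rdistrib: "((A::real^'n^'n) + B) ** C = A ** C + B ** C"
  by (simp add: matrix_matrix_mult_def Finite_Cartesian_Product.vec_eq_iff distrib_right sum.distrib)

lemma trace_scale: "trace (c *\<^sub>R (A::real^'n^'n)) = c * trace A"
  by (simp add: trace_def sum_distrib_left)

lemma killing_sym: "killing C x y = killing C y x"
  unfolding killing_def by (rule trace_mul_sym)

lemma killing_add_left: "killing C (x + x') y = killing C x y + killing C x' y"
  unfolding killing_def ad_mat_add matrix_add_rdistrib trace_add ..

lemma killing_scale_left: "killing C (c *\<^sub>R x) y = c * killing C x y"
  unfolding killing_def ad_mat_scale scalar_matrix_assoc[symmetric] trace_scale ..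

lemma killing_diff_left: "killing C (x - x') y = killing C x y - killing C x' y"
  unfolding killing_def ad_mat_diff matrix_diff_rdistrib trace_sub ..

lemma linear_killing_left: "linear (\<lambda>x. killing C x y)"
  by (rule linearI) (simp_all add: killing_add_left killing_scale_left)

lemma linear_killing_right: "linear (killing C x)"
  using linear_killing_left by (simp add: killing_sym)

lemma axis_in_Basis_cases: "(v::real^'n) \<in> Basis \<Longrightarrow> \<exists>i. v = axis i 1"
  unfolding Basis_vec_def by auto

lemma linear_eq_on_axes:
  fixes f g :: "real^'n \<Rightarrow> real"
  assumes "linear f" "linear g" "\<And>i. f (axis i 1) = g (axis i 1)"
  shows "f = g"
  using linear_eq_stdbasis[OF assms(1,2)] assms(3) axis_in_Basis_cases by metis

lemma killing_represents_functional:
  assumes nondeg: "\<And>x. (\<And>y. killing C x y = 0) \<Longrightarrow> x = 0"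
    and lf: "linear f"
  obtains b where "\<And>x. killing C b x = f x"
proof -
  define K where "K b = (\<chi> l. killing C b (axis l 1))" for b
  have lK: "linear K"
    by (intro linearI) (simp_all add: K_def Finite_Cartesian_Product.vec_eq_iff killing_add_left
        killing_scale_left)
  have "inj K"
  proof (rule injI)
    fix b b'
    assume "K b = K b'"
    then have "killing C (b - b') (axis l 1) = 0" for l
      unfolding K_def Finite_Cartesian_Product.vec_eq_iff by (simp add: killing_diff_left)
    then have "killing C (b - b') = (\<lambda>y. 0)"
      by (intro linear_eq_on_axes linear_killing_right) (simp_all add: module_hom_zero)
    then have "b - b' = 0" by (intro nondeg) metis
    then show "b = b'" by simp
  qed
  then have "surj K" by (rule linear_injective_imp_surjective[OF lK]) simp
  then obtain b where b: "K b = (\<chi> l. f (axis l 1))" by (metis surjD)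
  have "killing C b = f"
    using b by (intro linear_eq_on_axes linear_killing_right lf)
      (simp add: K_def Finite_Cartesian_Product.vec_eq_iff)
  then show ?thesis using that by auto
qed

locale lie_structure =
  fixes C :: "'i::finite \<Rightarrow> 'i \<Rightarrow> 'i \<Rightarrow> real"
  assumes ad_mat_lie_bracket:
    "\<And>x y. ad_mat C (lie_bracket C x y) = ad_mat C x ** ad_mat C y - ad_mat C y ** ad_mat C x"
begin

lemma killing_invariant: "killing C (lie_bracket C z x) y = - killing C x (lie_bracket C z y)"
proof -
  let ?Z = "ad_mat C z" and ?X = "ad_mat C x" and ?Y = "ad_mat C y"
  have "killing C (lie_bracket C z x) y = trace (?Z ** (?X ** ?Y)) - trace (?X ** ?Z ** ?Y)"
    unfolding killing_def ad_mat_lie_bracket matrix_diff_rdistrib trace_sub matrix_mul_assoc ..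
  moreover have "killing C x (lie_bracket C z y) = trace (?X ** ?Z ** ?Y) - trace (?X ** ?Y ** ?Z)"
    unfolding killing_def ad_mat_lie_bracket matrix_diff_ldistrib trace_sub matrix_mul_assoc ..
  moreover have "trace (?Z ** (?X ** ?Y)) = trace (?X ** ?Y ** ?Z)"
    by (rule trace_mul_sym)
  ultimately show ?thesis by simp
qed

lemma ad_mat_derivation:
  assumes der: "\<And>x y. D *v lie_bracket C x y = lie_bracket C (D *v x) y + lie_bracket C x (D *v y)"
  shows "ad_mat C (D *v x) = D ** ad_mat C x - ad_mat C x ** D"
proof -
  have "ad_mat C (D *v x) *v y = (D ** ad_mat C x - ad_mat C x ** D) *v y" for y
    using der[of x y] unfolding lie_bracket_def matrix_vector_mult_diff_rdistrib
      matrix_vector_mul_assoc[symmetric] by (simp add: algebra_simps)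
  then show ?thesis by (simp add: matrix_eq)
qed

text \<open>$\kappa(Dx, [y,z]) = \mathrm{tr}(D \circ \mathrm{ad}[x,[y,z]]) = 0$, and the brackets span.\<close>

lemma trace_orthogonal_derivation_eq_0:
  assumes nondeg: "\<And>x. (\<And>y. killing C x y = 0) \<Longrightarrow> x = 0"
    and perfect: "span (range (\<lambda>(x, y). lie_bracket C x y)) = UNIV"
    and der: "\<And>x. ad_mat C (D *v x) = D ** ad_mat C x - ad_mat C x ** D"
    and orth: "\<And>x. trace (ad_mat C x ** D) = 0"
  shows "D = 0"
proof -
  have on_brackets: "killing C (D *v x) (lie_bracket C y z) = 0" for x y z
  proof -
    let ?A = "ad_mat C x" and ?T = "ad_mat C (lie_bracket C y z)"
    have "trace (?A ** D ** ?T) = trace (?A ** (D ** ?T))"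
      by (simp only: matrix_mul_assoc)
    also have "\<dots> = trace ((D ** ?T) ** ?A)"
      by (rule trace_mul_sym)
    finally have cyclic: "trace (?A ** D ** ?T) = trace ((D ** ?T) ** ?A)" .
    have "killing C (D *v x) (lie_bracket C y z) = trace (D ** ?A ** ?T) - trace (?A ** D ** ?T)"
      unfolding killing_def der matrix_diff_rdistrib trace_sub ..
    also note cyclic
    also have "trace (D ** ?A ** ?T) - trace ((D ** ?T) ** ?A) = trace (D ** (?A ** ?T - ?T ** ?A))"
      by (simp only: matrix_diff_ldistrib trace_sub matrix_mul_assoc)
    also have "\<dots> = trace (ad_mat C (lie_bracket C x (lie_bracket C y z)) ** D)"
      unfolding ad_mat_lie_bracket[of x] by (rule trace_mul_sym)
    finally show ?thesis by (simp only: orth)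
  qed
  have "killing C (D *v x) w = 0" for x w
  proof -
    have "range (\<lambda>(x, y). lie_bracket C x y) \<subseteq> {w. killing C (D *v x) w = 0}"
      using on_brackets by auto
    moreover have "Real_Vector_Spaces.subspace {w. killing C (D *v x) w = 0}"
      using linear_killing_right[of C "D *v x"]
      by (simp add: Real_Vector_Spaces.subspace_def linear_add linear_scale linear_0)
    ultimately have "span (range (\<lambda>(x, y). lie_bracket C x y)) \<subseteq> {w. killing C (D *v x) w = 0}"
      by (rule span_minimal)
    then show ?thesis using perfect by auto
  qed
  then have "D *v x = 0" for x by (intro nondeg)
  then show "D = 0" by (simp add: matrix_eq)
qed

text \<open>The inner derivation $\mathrm{ad}\,b$ removed from $D$ is the one for which $b$ represents
  the functional $x \mapsto \mathrm{tr}(\mathrm{ad}\,x \circ D)$.\<close>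

lemma derivation_is_inner:
  assumes nondeg: "\<And>x. (\<And>y. killing C x y = 0) \<Longrightarrow> x = 0"
    and perfect: "span (range (\<lambda>(x, y). lie_bracket C x y)) = UNIV"
    and der: "\<And>x y. D *v lie_bracket C x y = lie_bracket C (D *v x) y + lie_bracket C x (D *v y)"
  obtains b where "D = ad_mat C b"
proof -
  have "linear (\<lambda>x. trace (ad_mat C x ** D))"
    by (rule linearI) (simp_all add: ad_mat_add ad_mat_scale matrix_add_rdistrib trace_add
        scalar_matrix_assoc[symmetric] trace_scale)
  then obtain b where b: "\<And>x. killing C b x = trace (ad_mat C x ** D)"
    using killing_represents_functional[OF nondeg] by blast
  have der': "ad_mat C ((D - ad_mat C b) *v x)
      = (D - ad_mat C b) ** ad_mat C x - ad_mat C x ** (D - ad_mat C b)" for x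
    using ad_mat_lie_bracket[of b x]
    unfolding matrix_vector_mult_diff_rdistrib ad_mat_diff ad_mat_derivation[OF der] matrix_diff_rdistrib
      matrix_diff_ldistrib lie_bracket_def
    by simp
  have orth: "trace (ad_mat C x ** (D - ad_mat C b)) = 0" for x
    using b[of x] killing_sym[of C x b]
    unfolding matrix_diff_ldistrib trace_sub killing_def by simp
  have "D - ad_mat C b = 0"
    using trace_orthogonal_derivation_eq_0[OF nondeg perfect der' orth] .
  then show ?thesis using that by auto
qed

end

section \<open>The Lie algebra so(2,3)\<close>

lemma UNIV_5: "(UNIV::5 set) = {0,1,2,3,4}"
proof -
  have "x \<in> {0,1,2,3,4}" for x :: 5
  proof (cases x rule: bit1_cases)
    case (of_int z)
    then have "z = 0 \<or> z = 1 \<or> z = 2 \<or> z = 3 \<or> z = 4" by auto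
    then show ?thesis using of_int by auto
  qed
  then show ?thesis by auto
qed

lemma mat5_mult_eq_fmat_mult: "mat5_mult = fmat_mult"
  by (intro ext) (simp add: mat5_mult_def fmat_mult_def)

definition eta_diag :: "5 \<Rightarrow> real"
  where "eta_diag a = (if a = 0 \<or> a = 1 then 1 else -1)"

lemma eta_diag_sq [simp]: "eta_diag a * eta_diag a = 1"
  by (simp add: eta_diag_def)

lemma eta_diag_sq_mult [simp]: "eta_diag a * (eta_diag a * x) = x"
  by (simp add: eta_diag_def)

lemma eta_diag_nonzero [simp]: "eta_diag a \<noteq> 0"
  by (simp add: eta_diag_def)

lemma eta_diag_values: "eta_diag 0 = 1" "eta_diag 1 = 1" "eta_diag 2 = -1" "eta_diag 3 = -1" "eta_diag 4 = -1"
  by (simp_all add: eta_diag_def)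

lemma eta23_eq_diag: "eta23 a b = (if a = b then eta_diag a else 0)"
  by (simp add: eta23_def eta_diag_def)

lemma in_so23_iff: "in_so23 X \<longleftrightarrow> (\<forall>a b. X b a = - (eta_diag a * eta_diag b * X a b))"
proof -
  have "(\<Sum>c\<in>UNIV. X c a * eta23 c b) + (\<Sum>c\<in>UNIV. eta23 a c * X c b) = X b a * eta_diag b + eta_diag a * X a b"
    for a b by (simp add: eta23_eq_diag mult_if_zero_right mult_if_zero_left)
  moreover have "X b a * eta_diag b + eta_diag a * X a b = 0 \<longleftrightarrow> X b a = - (eta_diag a * eta_diag b * X a b)"
    for a b by (auto simp: eta_diag_def)
  ultimately show ?thesis unfolding in_so23_def by simp
qed

lemma in_so23_antisym: "in_so23 X \<Longrightarrow> X b a = - (eta_diag a * eta_diag b * X a b)"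
  using in_so23_iff by blast

lemma in_so23_diag: "in_so23 X \<Longrightarrow> X a a = 0"
  using in_so23_antisym[of X a a] by simp

definition so23_gen :: "5 \<Rightarrow> 5 \<Rightarrow> 5 \<Rightarrow> 5 \<Rightarrow> real" where
  "so23_gen a b = (\<lambda>c d. (if c = a \<and> d = b then 1 else 0)
     - eta_diag a * eta_diag b * (if c = b \<and> d = a then 1 else 0))"

lemma so23_gen_eq_0:
  assumes "\<not> (c = a \<and> d = b)" "\<not> (c = b \<and> d = a)"
  shows "so23_gen a b c d = 0"
  unfolding so23_gen_def by (simp only: assms if_False mult_zero_right diff_zero)

lemma in_so23_gen: "in_so23 (so23_gen a b)"
  unfolding in_so23_iff
proof (intro allI)
  fix c d
  show "so23_gen a b d c = - (eta_diag c * eta_diag d * so23_gen a b c d)"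
    unfolding so23_gen_def
    by (cases "c = a"; cases "d = b"; cases "c = b"; cases "d = a") (simp_all add: algebra_simps)
qed

lemma sum_delta_pair_left:
  "(\<Sum>e\<in>UNIV. (if c = a \<and> e = (b::'a::finite) then 1 else 0) * (f e::real)) = (if c = a then f b else 0)"
  by (cases "c = a") (auto simp: mult_if_zero_left sum.delta)

lemma sum_delta_pair_right:
  "(\<Sum>e\<in>UNIV. (f e::real) * (if e = (a::'a::finite) \<and> d = b then 1 else 0)) = (if d = b then f a else 0)"
  by (cases "d = b") (auto simp: mult_if_zero_right sum.delta)

lemma fmat_mult_gen_left:
  "fmat_mult (so23_gen a b) Y c d
     = (if c = a then Y b d else 0) - eta_diag a * eta_diag b * (if c = b then Y a d else 0)"
proof -
  have "fmat_mult (so23_gen a b) Y c d = (\<Sum>e\<in>UNIV. (if c = a \<and> e = b then 1 else 0) * Y e d)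
     - eta_diag a * eta_diag b * (\<Sum>e\<in>UNIV. (if c = b \<and> e = a then 1 else 0) * Y e d)"
    unfolding fmat_mult_def so23_gen_def
    by (simp add: left_diff_distrib sum_subtractf sum_distrib_left mult.assoc)
  then show ?thesis by (simp only: sum_delta_pair_left)
qed

lemma fmat_mult_gen_right:
  "fmat_mult Y (so23_gen a b) c d
     = (if d = b then Y c a else 0) - eta_diag a * eta_diag b * (if d = a then Y c b else 0)"
proof -
  have "fmat_mult Y (so23_gen a b) c d = (\<Sum>e\<in>UNIV. Y c e * (if e = a \<and> d = b then 1 else 0))
     - eta_diag a * eta_diag b * (\<Sum>e\<in>UNIV. Y c e * (if e = b \<and> d = a then 1 else 0))"
    unfolding fmat_mult_def so23_gen_def
    by (simp add: right_diff_distrib sum_subtractf sum_distrib_left mult.left_commute)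
  then show ?thesis by (simp only: sum_delta_pair_right)
qed

lemma fmat_bracket_gen:
  "fmat_bracket (so23_gen a b) Y c d
     = (if c = a then Y b d else 0) - eta_diag a * eta_diag b * (if c = b then Y a d else 0)
       - ((if d = b then Y c a else 0) - eta_diag a * eta_diag b * (if d = a then Y c b else 0))"
  unfolding fmat_bracket_def fmat_mult_gen_left fmat_mult_gen_right ..

lemma fmat_mult_so23_swap:
  assumes X: "in_so23 X" and Y: "in_so23 Y"
  shows "fmat_mult X Y b a = eta_diag a * eta_diag b * fmat_mult Y X a b"
proof -
  have "fmat_mult X Y b a = (\<Sum>c\<in>UNIV. X b c * Y c a)"
    by (simp add: fmat_mult_def)
  also have "\<dots> = (\<Sum>c\<in>UNIV. eta_diag a * eta_diag b * (Y a c * X c b))"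
  proof (rule sum.cong[OF refl])
    fix c
    have "X b c * Y c a = (eta_diag c * eta_diag b * X c b) * (eta_diag a * eta_diag c * Y a c)"
      using in_so23_antisym[OF X, of c b] in_so23_antisym[OF Y, of a c] by simp
    also have "\<dots> = (eta_diag c * eta_diag c) * (eta_diag a * eta_diag b * (Y a c * X c b))"
      by (simp only: ac_simps)
    finally show "X b c * Y c a = eta_diag a * eta_diag b * (Y a c * X c b)" by simp
  qed
  also have "\<dots> = eta_diag a * eta_diag b * fmat_mult Y X a b"
    by (simp add: fmat_mult_def sum_distrib_left)
  finally show ?thesis .
qed

lemma in_so23_fmat_bracket:
  assumes X: "in_so23 X" and Y: "in_so23 Y"
  shows "in_so23 (fmat_bracket X Y)"
  unfolding in_so23_iff fmat_bracket_def
  using fmat_mult_so23_swap[OF X Y] fmat_mult_so23_swap[OF Y X] by (simp add: algebra_simps)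

lemma so23_gen_swap: "so23_gen b a = (\<lambda>x y. -(eta_diag a * eta_diag b) * so23_gen a b x y)"
proof (intro ext)
  fix x y
  show "so23_gen b a x y = -(eta_diag a * eta_diag b) * so23_gen a b x y"
    unfolding so23_gen_def
    by (cases "x = a"; cases "y = b"; cases "x = b"; cases "y = a") (simp_all add: algebra_simps)
qed

lemma so23_gen_diag: "so23_gen a a = (\<lambda>x y. 0)"
  unfolding so23_gen_def by (intro ext) simp

lemma fmat_bracket_gen_chain:
  assumes "a \<noteq> b" "b \<noteq> c" "a \<noteq> c"
  shows "fmat_bracket (so23_gen a b) (so23_gen b c) = so23_gen a c"
proof (intro ext)
  fix x y
  have s: "eta_diag a * eta_diag b * (eta_diag b * eta_diag c) = eta_diag a * eta_diag c"
    by (metis (no_types, lifting) mult.assoc mult.commute eta_diag_sq_mult)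
  show "fmat_bracket (so23_gen a b) (so23_gen b c) x y = so23_gen a c x y"
    unfolding fmat_bracket_gen using assms s
    unfolding so23_gen_def
    by (cases "x = a"; cases "y = c"; cases "x = c"; cases "y = a"; cases "x = b"; cases "y = b")
       (simp_all add: algebra_simps)
qed

definition ad_sq_gen :: "5 \<Rightarrow> 5 \<Rightarrow> (5 \<Rightarrow> 5 \<Rightarrow> real) \<Rightarrow> 5 \<Rightarrow> 5 \<Rightarrow> real"
  where "ad_sq_gen a b X = fmat_bracket (so23_gen a b) (fmat_bracket (so23_gen a b) X)"

definition ad_sq_gen_factor :: "5 \<Rightarrow> 5 \<Rightarrow> 5 \<Rightarrow> 5 \<Rightarrow> real" where
  "ad_sq_gen_factor a b c d = (if (c = a \<and> d = b) \<or> (c = b \<and> d = a) then 0 else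
     - (eta_diag a * eta_diag b) * ((if c = a then 1 else 0) + (if c = b then 1 else 0)
                                    + (if d = a then 1 else 0) + (if d = b then 1 else 0)))"

lemma ad_sq_gen_apply:
  assumes X: "in_so23 X" and ab: "a \<noteq> b"
  shows "ad_sq_gen a b X c d = ad_sq_gen_factor a b c d * X c d"
proof -
  have r: "X b a = -(eta_diag a * eta_diag b * X a b)" using in_so23_antisym[OF X] by blast
  have ra: "X a a = 0" "X b b = 0" using in_so23_diag[OF X] by auto
  show ?thesis
    unfolding ad_sq_gen_def fmat_bracket_gen ad_sq_gen_factor_def
    using ab r ra
    by (cases "c = a"; cases "c = b"; cases "d = a"; cases "d = b") (simp_all add: algebra_simps)
qed

lemma in_so23_ad_sq_gen: "in_so23 X \<Longrightarrow> in_so23 (ad_sq_gen a b X)"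
  unfolding ad_sq_gen_def by (intro in_so23_fmat_bracket in_so23_gen)

lemma obtain_three_others:
  assumes "p \<noteq> (q::5)"
  obtains r s t where "r \<noteq> p" "r \<noteq> q" "s \<noteq> p" "s \<noteq> q" "t \<noteq> p" "t \<noteq> q"
    "r \<noteq> s" "r \<noteq> t" "s \<noteq> t" "\<And>x. x = p \<or> x = q \<or> x = r \<or> x = s \<or> x = t"
proof -
  have "card (UNIV - {p,q}) = 3" using assms by (simp add: card_Diff_subset)
  then obtain r s t where rst: "UNIV - {p,q} = {r,s,t}" "r \<noteq> s" "s \<noteq> t" "r \<noteq> t"
    by (auto simp: card_3_iff)
  have "r \<in> UNIV - {p,q}" "s \<in> UNIV - {p,q}" "t \<in> UNIV - {p,q}" using rst(1) by auto
  moreover have "x = p \<or> x = q \<or> x = r \<or> x = s \<or> x = t" for x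
  proof -
    have "x \<in> {p,q} \<or> x \<in> UNIV - {p,q}" by blast
    then show ?thesis using rst(1) by blast
  qed
  ultimately show ?thesis using that rst by blast
qed

lemma ad_sq_gen_factor_outside:
  "c \<noteq> a \<Longrightarrow> c \<noteq> b \<Longrightarrow> d \<noteq> a \<Longrightarrow> d \<noteq> b \<Longrightarrow> ad_sq_gen_factor a b c d = 0"
  "ad_sq_gen_factor a b a b = 0" "ad_sq_gen_factor a b b a = 0"
  unfolding ad_sq_gen_factor_def by simp_all

lemma ad_sq_gen_factor_nonzero:
  "d \<noteq> a \<Longrightarrow> d \<noteq> b \<Longrightarrow> ad_sq_gen_factor a b a d \<noteq> 0"
  "c \<noteq> a \<Longrightarrow> c \<noteq> b \<Longrightarrow> ad_sq_gen_factor a b c a \<noteq> 0"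
  unfolding ad_sq_gen_factor_def by simp_all

lemma ad_sq_gen_factor_sym: "ad_sq_gen_factor a b d c = ad_sq_gen_factor a b c d"
  unfolding ad_sq_gen_factor_def by auto

text \<open>Four double commutators with generators kill every entry of $X$ except those at $(p,q)$
  and $(q,p)$, and multiply these by a nonzero factor.\<close>

lemma ad_sq_gen_isolate:
  assumes X: "in_so23 X" and "p \<noteq> q"
  obtains r s t k where "k \<noteq> 0"
    "ad_sq_gen p t (ad_sq_gen p s (ad_sq_gen q r (ad_sq_gen p r X))) = (\<lambda>x y. k * X p q * so23_gen p q x y)"
proof -
  obtain r s t where d: "r \<noteq> p" "r \<noteq> q" "s \<noteq> p" "s \<noteq> q" "t \<noteq> p" "t \<noteq> q"
    "r \<noteq> s" "r \<noteq> t" "s \<noteq> t" and all: "\<And>x. x = p \<or> x = q \<or> x = r \<or> x = s \<or> x = t"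
    by (rule obtain_three_others[OF \<open>p \<noteq> q\<close>]) blast
  define f where "f x y = ad_sq_gen_factor p t x y * (ad_sq_gen_factor p s x y
                              * (ad_sq_gen_factor q r x y * ad_sq_gen_factor p r x y))" for x y
  have f_sym: "f y x = f x y" for x y
    unfolding f_def by (simp add: ad_sq_gen_factor_sym)
  have X1: "in_so23 (ad_sq_gen p r X)" and X2: "in_so23 (ad_sq_gen q r (ad_sq_gen p r X))"
    and X3: "in_so23 (ad_sq_gen p s (ad_sq_gen q r (ad_sq_gen p r X)))"
    by (intro in_so23_ad_sq_gen X)+
  have apply4: "ad_sq_gen p t (ad_sq_gen p s (ad_sq_gen q r (ad_sq_gen p r X))) x y = f x y * X x y" for x y
    unfolding ad_sq_gen_apply[OF X3 d(5)[symmetric]] ad_sq_gen_apply[OF X2 d(3)[symmetric]]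
      ad_sq_gen_apply[OF X1 d(2)[symmetric]] ad_sq_gen_apply[OF X d(1)[symmetric]] f_def
    by (simp only: mult.assoc)
  have entries: "f x y * X x y = f p q * X p q * so23_gen p q x y" for x y
  proof -
    consider "x = p" "y = q" | "x = q" "y = p" | "x = y"
      | "\<not> (x = p \<and> y = q)" "\<not> (x = q \<and> y = p)" "x \<noteq> y"
      by blast
    then show ?thesis
    proof cases
      case 1
      then show ?thesis using \<open>p \<noteq> q\<close> by (simp add: so23_gen_def)
    next
      case 2
      then show ?thesis
        using \<open>p \<noteq> q\<close> in_so23_antisym[OF X, of p q] f_sym[of p q] by (simp add: so23_gen_def)
    next
      case 3
      then have "so23_gen p q x y = 0"
        using \<open>p \<noteq> q\<close> by (intro so23_gen_eq_0) blast+
      then show ?thesis using in_so23_diag[OF X] 3 by simp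
    next
      case 4
      note distinct = d d[symmetric] \<open>p \<noteq> q\<close> \<open>p \<noteq> q\<close>[symmetric]
      from all[of x] all[of y] 4 have "f x y = 0"
        unfolding f_def by (elim disjE; simp add: distinct ad_sq_gen_factor_outside)
      then show ?thesis using so23_gen_eq_0[OF 4(1,2)] by simp
    qed
  qed
  have "f p q \<noteq> 0"
    using d \<open>p \<noteq> q\<close> unfolding f_def by (simp add: ad_sq_gen_factor_nonzero)
  moreover have "ad_sq_gen p t (ad_sq_gen p s (ad_sq_gen q r (ad_sq_gen p r X)))
      = (\<lambda>x y. f p q * X p q * so23_gen p q x y)"
    by (intro ext) (simp only: apply4, rule entries)
  ultimately show ?thesis by (rule that)
qed

lemma so23_gen_generates:
  assumes closed: "\<And>a b Y. Y \<in> I \<Longrightarrow> fmat_bracket (so23_gen a b) Y \<in> I"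
    and scaled: "\<And>k Y. Y \<in> I \<Longrightarrow> (\<lambda>x y. k * Y x y) \<in> I"
    and gen: "so23_gen p q \<in> I" and "p \<noteq> q"
  shows "so23_gen a b \<in> I"
proof -
  have closed_right: "fmat_bracket Y (so23_gen c d) \<in> I" if "Y \<in> I" for Y c d
    unfolding fmat_bracket_antisym[of Y] by (intro scaled closed that)
  have from_p: "so23_gen p b \<in> I" if "b \<noteq> p" for b
  proof (cases "b = q")
    case False
    then have "so23_gen p b = fmat_bracket (so23_gen p q) (so23_gen q b)"
      using fmat_bracket_gen_chain[of p q b] \<open>p \<noteq> q\<close> that by simp
    then show ?thesis using closed_right[OF gen] by simp
  qed (use gen in simp)
  show ?thesis
  proof (cases "a = b")
    case True
    then show ?thesis using scaled[OF gen, of 0] by (simp add: so23_gen_diag)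
  next
    case False
    show ?thesis
    proof (cases "a = p")
      case True
      then show ?thesis using from_p \<open>a \<noteq> b\<close> by simp
    next
      case False
      show ?thesis
      proof (cases "b = p")
        case True
        have "so23_gen a p = (\<lambda>x y. -(eta_diag p * eta_diag a) * so23_gen p a x y)"
          by (rule so23_gen_swap)
        then show ?thesis
          using scaled[OF from_p[of a], of "-(eta_diag p * eta_diag a)"] \<open>a \<noteq> p\<close> True by simp
      next
        case False
        then have "so23_gen a b = fmat_bracket (so23_gen a p) (so23_gen p b)"
          using fmat_bracket_gen_chain[of a p b] \<open>a \<noteq> b\<close> \<open>a \<noteq> p\<close> by simp
        then show ?thesis using closed[OF from_p[of b]] False by simp
      qed
    qed
  qed
qed

lemma so23_ideal_contains_gens:
  assumes closed: "\<And>a b Y. Y \<in> I \<Longrightarrow> fmat_bracket (so23_gen a b) Y \<in> I"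
    and scaled: "\<And>k Y. Y \<in> I \<Longrightarrow> (\<lambda>x y. k * Y x y) \<in> I"
    and X: "X \<in> I" "in_so23 X" and "X p q \<noteq> 0"
  shows "so23_gen a b \<in> I"
proof -
  have "p \<noteq> q" using \<open>X p q \<noteq> 0\<close> in_so23_diag[OF X(2)] by auto
  obtain r s t k where "k \<noteq> 0" and
    isolate: "ad_sq_gen p t (ad_sq_gen p s (ad_sq_gen q r (ad_sq_gen p r X))) = (\<lambda>x y. k * X p q * so23_gen p q x y)"
    by (rule ad_sq_gen_isolate[OF X(2) \<open>p \<noteq> q\<close>])
  have "(\<lambda>x y. k * X p q * so23_gen p q x y) \<in> I"
    unfolding isolate[symmetric] ad_sq_gen_def by (intro closed X(1))
  from scaled[OF this, of "1 / (k * X p q)"] have "so23_gen p q \<in> I"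
    using \<open>k \<noteq> 0\<close> \<open>X p q \<noteq> 0\<close> by simp
  from so23_gen_generates[OF closed scaled this \<open>p \<noteq> q\<close>] show ?thesis .
qed

definition so23_pairs :: "(5 \<times> 5) list" where
  "so23_pairs = [(0,1),(0,2),(0,3),(0,4),(1,2),(1,3),(1,4),(2,3),(2,4),(3,4)]"

lemma so23_decomp:
  assumes X: "in_so23 X"
  shows "X c d = (\<Sum>p\<in>set so23_pairs. X (fst p) (snd p) * so23_gen (fst p) (snd p) c d)"
proof -
  have r: "X b a = - (eta_diag a * eta_diag b * X a b)" for a b using in_so23_antisym[OF X] by blast
  have dg: "X a a = 0" for a using in_so23_diag[OF X] by blast
  have s: "(\<Sum>p\<in>set so23_pairs. X (fst p) (snd p) * so23_gen (fst p) (snd p) c d) =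
    X 0 1 * so23_gen 0 1 c d + X 0 2 * so23_gen 0 2 c d + X 0 3 * so23_gen 0 3 c d + X 0 4 * so23_gen 0 4 c d +
    X 1 2 * so23_gen 1 2 c d + X 1 3 * so23_gen 1 3 c d + X 1 4 * so23_gen 1 4 c d + X 2 3 * so23_gen 2 3 c d +
    X 2 4 * so23_gen 2 4 c d + X 3 4 * so23_gen 3 4 c d"
    unfolding so23_pairs_def by simp
  have c: "c \<in> {0,1,2,3,4}" and d: "d \<in> {0,1,2,3,4}" using UNIV_5 by auto
  show ?thesis unfolding s using c d
    by (elim insertE emptyE; simp add: so23_gen_def eta_diag_values dg r[of 0 1] r[of 0 2] r[of 0 3] r[of 0 4]
       r[of 1 2] r[of 1 3] r[of 1 4] r[of 2 3] r[of 2 4] r[of 3 4])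
qed

definition fmat_vec :: "(5 \<Rightarrow> 5 \<Rightarrow> real) \<Rightarrow> real^(5\<times>5)" where
  "fmat_vec X = (\<chi> p. X (fst p) (snd p))"

lemma fmat_vec_inj: "fmat_vec X = fmat_vec Y \<Longrightarrow> X = Y"
proof (intro ext)
  fix a b
  assume h: "fmat_vec X = fmat_vec Y"
  have "fmat_vec X $ (a,b) = fmat_vec Y $ (a,b)" using h by simp
  then show "X a b = Y a b" unfolding fmat_vec_def by simp
qed

lemma fmat_vec_decomp:
  assumes X: "in_so23 X"
  shows "fmat_vec X = (\<Sum>p\<in>set so23_pairs. X (fst p) (snd p) *\<^sub>R fmat_vec (so23_gen (fst p) (snd p)))"
  unfolding Finite_Cartesian_Product.vec_eq_iff
proof
  fix q :: "5\<times>5"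
  show "fmat_vec X $ q = (\<Sum>p\<in>set so23_pairs. X (fst p) (snd p) *\<^sub>R fmat_vec (so23_gen (fst p) (snd p))) $ q"
    unfolding fmat_vec_def sum_component
    using so23_decomp[OF X, of "fst q" "snd q"] by simp
qed

section \<open>A basis of so(2,3) with the given structure constants\<close>

locale so23_basis =
  fixes Tv :: "10 \<Rightarrow> 10 \<Rightarrow> 10 \<Rightarrow> real" and E :: "10 \<Rightarrow> 5 \<Rightarrow> 5 \<Rightarrow> real"
  assumes in_so23_basis: "\<And>i. in_so23 (E i)"
    and basis_independent: "\<And>c::10 \<Rightarrow> real. \<forall>a b. (\<Sum>i\<in>UNIV. c i * E i a b) = 0 \<Longrightarrow> \<forall>i. c i = 0"
    and represents_basis: "represents Tv E"
begin

abbreviation emb :: "real^10 \<Rightarrow> 5 \<Rightarrow> 5 \<Rightarrow> real"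
  where "emb \<equiv> fmat_comb E"

lemma emb_lie_bracket: "emb (lie_bracket Tv x y) = fmat_bracket (emb x) (emb y)"
  by (rule fmat_comb_lie_bracket[OF represents_basis])

lemma emb_eq_zero:
  assumes "emb x = (\<lambda>a b. 0)"
  shows "x = 0"
proof -
  have "\<forall>a b. (\<Sum>i\<in>UNIV. x $ i * E i a b) = 0"
    using assms unfolding fmat_comb_def by meson
  then have "\<forall>i. x $ i = 0"
    by (rule basis_independent)
  then show ?thesis
    by (simp add: Finite_Cartesian_Product.vec_eq_iff)
qed

lemma emb_inj: "emb x = emb y \<Longrightarrow> x = y"
  using emb_eq_zero[of "x - y"] by (simp add: fmat_comb_diff fun_eq_iff)

lemma in_so23_emb: "in_so23 (emb x)"
  unfolding in_so23_iff
proof (intro allI)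
  fix a b
  have "emb x b a = (\<Sum>i\<in>UNIV. x $ i * (- (eta_diag a * eta_diag b * E i a b)))"
    unfolding fmat_comb_def
    by (intro sum.cong refl) (simp only: in_so23_antisym[OF in_so23_basis, of _ b a])
  then show "emb x b a = - (eta_diag a * eta_diag b * emb x a b)"
    unfolding fmat_comb_def by (simp add: sum_distrib_left sum_negf algebra_simps)
qed

text \<open>The injective linear map \<open>fmat_vec \<circ> emb\<close> has a 10-dimensional image inside the span
  of the 10 generators, hence onto it.\<close>

lemma emb_surj_gen: "\<exists>u. emb u = so23_gen a b"
proof -
  define B where "B = (\<lambda>p. fmat_vec (so23_gen (fst p) (snd p))) ` set so23_pairs"
  have lin: "linear (fmat_vec \<circ> emb)"
    by (rule linearI) (simp_all add: fmat_vec_def fmat_comb_add fmat_comb_scale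
        Finite_Cartesian_Product.vec_eq_iff)
  have "inj (fmat_vec \<circ> emb)"
    by (rule injI) (auto dest: fmat_vec_inj emb_inj)
  then have dim_range: "dim (range (fmat_vec \<circ> emb)) = 10"
    using dim_image_eq[OF lin, of UNIV] by (simp add: inj_on_def)
  have "card B \<le> card (set so23_pairs)"
    unfolding B_def by (rule card_image_le) simp
  also have "\<dots> \<le> 10"
    using card_length[of so23_pairs] by (simp add: so23_pairs_def)
  finally have dim_span: "dim (span B) \<le> 10"
    using dim_le_card[OF order_refl, of B] unfolding B_def by simp
  have in_span: "fmat_vec X \<in> span B" if "in_so23 X" for X
    unfolding fmat_vec_decomp[OF that] B_def by (intro span_sum span_mul span_base) auto
  then have "range (fmat_vec \<circ> emb) \<subseteq> span B"
    using in_so23_emb by auto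
  then have "range (fmat_vec \<circ> emb) = span B"
    using dim_range dim_span
    by (intro subspace_dim_equal linear_subspace_image[OF lin subspace_UNIV] subspace_span) simp_all
  then obtain u where "fmat_vec (so23_gen a b) = fmat_vec (emb u)"
    using in_span[OF in_so23_gen] by (metis comp_apply rangeE)
  then show ?thesis by (metis fmat_vec_inj)
qed

definition gen_coord :: "5 \<Rightarrow> 5 \<Rightarrow> real^10"
  where "gen_coord a b = (SOME u. emb u = so23_gen a b)"

lemma emb_gen_coord: "emb (gen_coord a b) = so23_gen a b"
  unfolding gen_coord_def using emb_surj_gen by (rule someI_ex)

lemma expansion_gen_coord:
  "v = (\<Sum>p\<in>set so23_pairs. emb v (fst p) (snd p) *\<^sub>R gen_coord (fst p) (snd p))"
proof (rule emb_inj, intro ext)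
  fix c d
  show "emb v c d = emb (\<Sum>p\<in>set so23_pairs. emb v (fst p) (snd p) *\<^sub>R gen_coord (fst p) (snd p)) c d"
    unfolding fmat_comb_sum[OF finite_set] fmat_comb_scale emb_gen_coord
    by (rule so23_decomp[OF in_so23_emb])
qed

lemma dual_gen_coord:
  "(\<Sum>p\<in>set so23_pairs. E i (fst p) (snd p) * gen_coord (fst p) (snd p) $ j) = (if i = j then 1 else 0)"
proof -
  have "(\<Sum>p\<in>set so23_pairs. E i (fst p) (snd p) * gen_coord (fst p) (snd p) $ j)
      = (\<Sum>p\<in>set so23_pairs. emb (axis i 1) (fst p) (snd p) *\<^sub>R gen_coord (fst p) (snd p)) $ j"
    unfolding fmat_comb_axis sum_component by simp
  also have "\<dots> = axis i (1::real) $ j"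
    using expansion_gen_coord[of "axis i 1"] by simp
  also have "\<dots> = (if i = j then 1 else 0)"
    by (simp add: axis_def)
  finally show ?thesis .
qed

lemma trace_via_gen_coord:
  "trace A = (\<Sum>p\<in>set so23_pairs. emb (A *v gen_coord (fst p) (snd p)) (fst p) (snd p))"
proof -
  let ?u = "\<lambda>p. gen_coord (fst p) (snd p)" and ?E = "\<lambda>i p. E i (fst p) (snd p)"
  have "(\<Sum>p\<in>set so23_pairs. emb (A *v ?u p) (fst p) (snd p))
      = (\<Sum>p\<in>set so23_pairs. \<Sum>i\<in>UNIV. \<Sum>j\<in>UNIV. A $ i $ j * (?E i p * ?u p $ j))"
    unfolding fmat_comb_def matrix_vector_mult_def
    by (simp add: sum_distrib_left sum_distrib_right algebra_simps)
  also have "\<dots> = (\<Sum>i\<in>UNIV. \<Sum>p\<in>set so23_pairs. \<Sum>j\<in>UNIV. A $ i $ j * (?E i p * ?u p $ j))"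
    by (rule sum.swap)
  also have "\<dots> = (\<Sum>i\<in>UNIV. \<Sum>j\<in>UNIV. \<Sum>p\<in>set so23_pairs. A $ i $ j * (?E i p * ?u p $ j))"
    by (intro sum.cong refl sum.swap)
  also have "\<dots> = (\<Sum>i\<in>UNIV. \<Sum>j\<in>UNIV. A $ i $ j * (\<Sum>p\<in>set so23_pairs. ?E i p * ?u p $ j))"
    by (simp add: sum_distrib_left)
  also have "\<dots> = trace A"
    unfolding dual_gen_coord by (simp add: trace_def mult_if_zero_right sum.delta)
  finally show ?thesis by simp
qed

lemma emb_ad_mat: "emb (ad_mat Tv x *v w) = fmat_bracket (emb x) (emb w)"
  using emb_lie_bracket unfolding lie_bracket_def .

lemma ad_mat_lie_bracket:
  "ad_mat Tv (lie_bracket Tv x y) = ad_mat Tv x ** ad_mat Tv y - ad_mat Tv y ** ad_mat Tv x"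
proof -
  have "emb (ad_mat Tv (lie_bracket Tv x y) *v w)
      = emb ((ad_mat Tv x ** ad_mat Tv y - ad_mat Tv y ** ad_mat Tv x) *v w)" for w
    unfolding matrix_vector_mult_diff_rdistrib matrix_vector_mul_assoc[symmetric] fmat_comb_diff
      emb_ad_mat emb_lie_bracket fmat_bracket_jacobi ..
  then show ?thesis by (simp add: emb_inj matrix_eq)
qed

sublocale lie_structure Tv
  by unfold_locales (rule ad_mat_lie_bracket)

lemma killing_via_gen_coord:
  "killing Tv x y = (\<Sum>p\<in>set so23_pairs.
     fmat_bracket (emb x) (fmat_bracket (emb y) (so23_gen (fst p) (snd p))) (fst p) (snd p))"
  unfolding killing_def trace_via_gen_coord matrix_vector_mul_assoc[symmetric]
  by (simp add: emb_ad_mat emb_gen_coord)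

text \<open>Only the six pairs sharing exactly one index with $(0,1)$ contribute, each with
  factor $-\eta_0\eta_1 = -1$.\<close>

lemma killing_gen_coord_01: "killing Tv (gen_coord 0 1) (gen_coord 0 1) = -6"
proof -
  have "killing Tv (gen_coord 0 1) (gen_coord 0 1)
      = (\<Sum>p\<in>set so23_pairs. ad_sq_gen_factor 0 1 (fst p) (snd p) * so23_gen (fst p) (snd p) (fst p) (snd p))"
    unfolding killing_via_gen_coord emb_gen_coord
    by (simp add: ad_sq_gen_apply[OF in_so23_gen, unfolded ad_sq_gen_def])
  also have "\<dots> = -6"
    by (simp add: so23_pairs_def ad_sq_gen_factor_def so23_gen_def eta_diag_values)
  finally show ?thesis .
qed

lemma ideal_eq_UNIV:
  assumes J: "Real_Vector_Spaces.subspace J" and closed: "\<And>z x. x \<in> J \<Longrightarrow> lie_bracket Tv z x \<in> J"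
    and "x \<in> J" "x \<noteq> 0"
  shows "J = UNIV"
proof -
  have closed_emb: "fmat_bracket (so23_gen a b) Y \<in> emb ` J" if "Y \<in> emb ` J" for a b Y
    using that closed by (auto simp: emb_lie_bracket[symmetric] emb_gen_coord[symmetric])
  have scaled_emb: "(\<lambda>x y. k * Y x y) \<in> emb ` J" if "Y \<in> emb ` J" for k Y
    using that J by (auto simp: fmat_comb_scale[symmetric] Real_Vector_Spaces.subspace_scale)
  obtain p q where "emb x p q \<noteq> 0"
    using emb_eq_zero \<open>x \<noteq> 0\<close> by blast
  then have "so23_gen a b \<in> emb ` J" for a b
    using \<open>x \<in> J\<close> by (intro so23_ideal_contains_gens[OF closed_emb scaled_emb _ in_so23_emb]) auto
  then have "gen_coord a b \<in> J" for a b
    by (metis emb_gen_coord emb_inj imageE)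
  then have "v \<in> J" for v
    using expansion_gen_coord[of v] J span_eq_iff
    by (metis (no_types, lifting) span_base span_mul span_sum)
  then show ?thesis by auto
qed

lemma killing_nondegenerate:
  assumes "\<And>y. killing Tv x y = 0"
  shows "x = 0"
proof (rule ccontr)
  assume "x \<noteq> 0"
  define R where "R = {v. \<forall>y. killing Tv v y = 0}"
  have "Real_Vector_Spaces.subspace R"
    unfolding Real_Vector_Spaces.subspace_def R_def
    using killing_scale_left[of Tv 0] by (simp add: killing_add_left killing_scale_left)
  moreover have "lie_bracket Tv z v \<in> R" if "v \<in> R" for z v
    using that unfolding R_def by (simp add: killing_invariant)
  ultimately have "R = UNIV"
    using ideal_eq_UNIV assms \<open>x \<noteq> 0\<close> R_def by blast
  then have "killing Tv (gen_coord 0 1) (gen_coord 0 1) = 0"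
    unfolding R_def by blast
  then show False
    using killing_gen_coord_01 by simp
qed

lemma span_lie_brackets: "span (range (\<lambda>(x, y). lie_bracket Tv x y)) = UNIV"
proof (rule ideal_eq_UNIV)
  show "lie_bracket Tv z x \<in> span (range (\<lambda>(x, y). lie_bracket Tv x y))" for z x
    by (rule span_base) (use rangeI[of "\<lambda>(x, y). lie_bracket Tv x y" "(z, x)"] in simp)
  have "emb (lie_bracket Tv (gen_coord 0 1) (gen_coord 1 2)) = emb (gen_coord 0 2)"
    unfolding emb_lie_bracket emb_gen_coord by (rule fmat_bracket_gen_chain) simp_all
  then show "gen_coord 0 2 \<in> span (range (\<lambda>(x, y). lie_bracket Tv x y))"
    by (metis emb_inj \<open>\<And>z x. lie_bracket Tv z x \<in> _\<close>)
  have "emb (gen_coord 0 2) 0 2 \<noteq> 0"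
    unfolding emb_gen_coord so23_gen_def by simp
  then show "gen_coord 0 2 \<noteq> 0" by auto
qed simp

lemma derivation_is_ad:
  assumes "\<And>x y. D *v lie_bracket Tv x y = lie_bracket Tv (D *v x) y + lie_bracket Tv x (D *v y)"
  obtains b where "D = ad_mat Tv b"
  using derivation_is_inner[OF killing_nondegenerate span_lie_brackets assms] by blast

end

section \<open>Schur's lemma for the spinor representation\<close>

text \<open>The fundamental theorem of algebra, through the characteristic polynomial.\<close>

lemma fmat_complex_eigenvector:
  fixes N :: "'n::finite \<Rightarrow> 'n \<Rightarrow> real"
  obtains k :: complex and z :: "'n \<Rightarrow> complex"
  where "z \<noteq> (\<lambda>a. 0)" "\<And>a. (\<Sum>b\<in>UNIV. complex_of_real (N a b) * z b) = k * z a"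
proof -
  let ?n = "CARD('n)"
  obtain h where h: "bij_betw h {0..<?n} (UNIV :: 'n set)"
    using ex_bij_betw_nat_finite[of "UNIV :: 'n set"] by auto
  define ix where "ix = the_inv_into {0..<?n} h"
  have h_ix: "h (ix a) = a" for a
    using f_the_inv_into_f_bij_betw[OF h] unfolding ix_def by simp
  have ix_less: "ix a < ?n" for a
    using the_inv_into_into[OF bij_betw_imp_inj_on[OF h], of a "{0..<?n}"] bij_betw_imp_surj_on[OF h]
    unfolding ix_def by auto
  have ix_h: "ix (h j) = j" if "j < ?n" for j
    using the_inv_into_f_f[OF bij_betw_imp_inj_on[OF h]] that unfolding ix_def by simp
  define A where "A = mat ?n ?n (\<lambda>(i, j). complex_of_real (N (h i) (h j)))"
  have A: "A \<in> carrier_mat ?n ?n"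
    unfolding A_def by simp
  obtain k where "k \<in> spectrum A"
    using spectrum_non_empty[OF A] by auto
  then obtain v where "eigenvector A v k"
    unfolding spectrum_def eigenvalue_def by auto
  then have v: "v \<in> carrier_vec ?n" "v \<noteq> 0\<^sub>v ?n" "A *\<^sub>v v = k \<cdot>\<^sub>v v"
    unfolding eigenvector_def using A by auto
  define z where "z a = v $ ix a" for a
  have "(\<Sum>b\<in>UNIV. complex_of_real (N a b) * z b) = k * z a" for a
  proof -
    have "(\<Sum>b\<in>UNIV. complex_of_real (N a b) * z b)
        = (\<Sum>j\<in>{0..<?n}. complex_of_real (N (h (ix a)) (h j)) * v $ j)"
      unfolding h_ix z_def sum.reindex_bij_betw[OF h, symmetric]
      by (intro sum.cong refl) (simp add: ix_h)
    also have "\<dots> = (A *\<^sub>v v) $ ix a"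
      using v(1) ix_less[of a] by (simp add: A_def scalar_prod_def row_def)
    also have "\<dots> = k * z a"
      using v ix_less[of a] by (simp add: z_def)
    finally show ?thesis .
  qed
  moreover have "z \<noteq> (\<lambda>a. 0)"
  proof
    assume "z = (\<lambda>a. 0)"
    then have "v $ j = 0" if "j < ?n" for j
      using fun_cong[of z _ "h j"] ix_h[OF that] unfolding z_def by simp
    then have "v = 0\<^sub>v ?n"
      using v(1) by (intro eq_vecI) auto
    then show False using v(2) by simp
  qed
  ultimately show ?thesis using that by blast
qed

lemma fmat_real_invariant_plane:
  fixes N :: "'n::finite \<Rightarrow> 'n \<Rightarrow> real"
  obtains u w :: "real^'n" and \<alpha> \<beta> :: real
  where "u \<noteq> 0 \<or> w \<noteq> 0" "fmat_apply N u = \<alpha> *\<^sub>R u - \<beta> *\<^sub>R w" "fmat_apply N w = \<beta> *\<^sub>R u + \<alpha> *\<^sub>R w"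
proof -
  obtain z k where z: "z \<noteq> (\<lambda>a. 0)" and eig: "\<And>a. (\<Sum>b\<in>UNIV. complex_of_real (N a b) * z b) = k * z a"
    using fmat_complex_eigenvector[of N] by blast
  define u :: "real^'n" where "u = (\<chi> a. Re (z a))"
  define w :: "real^'n" where "w = (\<chi> a. Im (z a))"
  have "u \<noteq> 0 \<or> w \<noteq> 0"
    using z unfolding u_def w_def by (auto simp: Finite_Cartesian_Product.vec_eq_iff complex_eq_iff)
  moreover have "fmat_apply N u = Re k *\<^sub>R u - Im k *\<^sub>R w"
    using arg_cong[OF eig, of Re]
    by (simp add: fmat_apply_def u_def w_def Re_sum Finite_Cartesian_Product.vec_eq_iff)
  moreover have "fmat_apply N w = Im k *\<^sub>R u + Re k *\<^sub>R w"
    using arg_cong[OF eig, of Im]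
    by (simp add: fmat_apply_def u_def w_def Im_sum Finite_Cartesian_Product.vec_eq_iff)
  ultimately show ?thesis using that by blast
qed

definition spin_gens :: "(4 \<Rightarrow> 10 \<Rightarrow> 4 \<Rightarrow> real) \<Rightarrow> 10 \<Rightarrow> 4 \<Rightarrow> 4 \<Rightarrow> real"
  where "spin_gens Ts i = (\<lambda>a b. Ts a i b)"

lemma spin_act_eq_fmat_apply: "spin_act Ts i = fmat_apply (spin_gens Ts i)"
  unfolding spin_act_def fmat_apply_def spin_gens_def ..

lemma is_rep_iff_represents: "is_rep Tv Ts \<longleftrightarrow> represents Tv (spin_gens Ts)"
  unfolding is_rep_def represents_def fmat_bracket_def fmat_mult_def spin_gens_def ..

lemma commuting_eigenvector_imp_scalar:
  assumes irr: "irreducible_rep Ts"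
    and comm: "\<And>i. fmat_mult N (spin_gens Ts i) = fmat_mult (spin_gens Ts i) N"
    and "v \<noteq> 0" "fmat_apply N v = l *\<^sub>R v"
  shows "N = fmat_scalar l"
proof -
  define W where "W = {w. fmat_apply N w = l *\<^sub>R w}"
  have "Real_Vector_Spaces.subspace W"
    unfolding Real_Vector_Spaces.subspace_def W_def by (simp add: fmat_apply_add fmat_apply_scale algebra_simps)
  moreover have "\<forall>i. \<forall>w\<in>W. spin_act Ts i w \<in> W"
    using comm unfolding W_def spin_act_eq_fmat_apply fmat_commute_iff_apply
    by (simp add: fmat_apply_scale)
  ultimately have "W = {0} \<or> W = UNIV"
    using irr unfolding irreducible_rep_def by blast
  moreover have "v \<in> W" unfolding W_def using assms by simp
  ultimately have "W = UNIV" using \<open>v \<noteq> 0\<close> by auto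
  then have "fmat_apply N w = fmat_apply (fmat_scalar l) w" for w
    unfolding W_def fmat_apply_scalar by blast
  then show ?thesis
    by (rule fmat_eqI)
qed

lemma complex_structure_pair_independent:
  fixes J :: "'a::real_vector \<Rightarrow> 'a"
  assumes J: "linear J" "\<And>w. J (J w) = - w" and "v \<noteq> 0" and "a *\<^sub>R v + b *\<^sub>R J v = 0"
  shows "a = 0 \<and> b = 0"
proof -
  have "J (a *\<^sub>R v + b *\<^sub>R J v) = 0"
    using assms(4) linear_0[OF J(1)] by simp
  then have "a *\<^sub>R J v - b *\<^sub>R v = 0"
    by (simp add: linear_add[OF J(1)] linear_scale[OF J(1)] J(2))
  moreover have "(a * a + b * b) *\<^sub>R v = a *\<^sub>R (a *\<^sub>R v + b *\<^sub>R J v) - b *\<^sub>R (a *\<^sub>R J v - b *\<^sub>R v)"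
    by (simp add: algebra_simps)
  ultimately have "(a * a + b * b) *\<^sub>R v = 0"
    using assms(4) by simp
  then have "a * a + b * b = 0"
    using \<open>v \<noteq> 0\<close> by simp
  then show ?thesis
    by (simp add: add_nonneg_eq_0_iff)
qed

lemma complex_structure_quadruple_independent:
  fixes J :: "'a::real_vector \<Rightarrow> 'a"
  assumes J: "linear J" "\<And>w. J (J w) = - w" and "v \<noteq> 0" and "v' \<notin> span {v, J v}"
    and zero: "a *\<^sub>R v + b *\<^sub>R J v + c *\<^sub>R v' + d *\<^sub>R J v' = 0"
  shows "a = 0 \<and> b = 0 \<and> c = 0 \<and> d = 0"
proof -
  have "J (a *\<^sub>R v + b *\<^sub>R J v + c *\<^sub>R v' + d *\<^sub>R J v') = 0"
    using zero linear_0[OF J(1)] by simp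
  then have zero_J: "a *\<^sub>R J v - b *\<^sub>R v + c *\<^sub>R J v' - d *\<^sub>R v' = 0"
    by (simp add: linear_add[OF J(1)] linear_scale[OF J(1)] J(2) algebra_simps)
  have "(c * c + d * d) *\<^sub>R v' = - ((c * a + d * b) *\<^sub>R v + (c * b - d * a) *\<^sub>R J v)"
  proof -
    have "c *\<^sub>R (a *\<^sub>R v + b *\<^sub>R J v + c *\<^sub>R v' + d *\<^sub>R J v')
        - d *\<^sub>R (a *\<^sub>R J v - b *\<^sub>R v + c *\<^sub>R J v' - d *\<^sub>R v') = 0"
      unfolding zero zero_J by simp
    then show ?thesis by (simp add: algebra_simps)
  qed
  also have "\<dots> \<in> span {v, J v}"
    by (intro span_neg span_add span_mul span_base) auto
  finally have "c * c + d * d = 0"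
    using \<open>v' \<notin> span {v, J v}\<close> span_mul[of "(c * c + d * d) *\<^sub>R v'" _ "1 / (c * c + d * d)"]
    by (cases "c * c + d * d = 0") auto
  then have "c = 0" "d = 0"
    by (simp_all add: add_nonneg_eq_0_iff)
  moreover have "a = 0 \<and> b = 0"
    using zero \<open>c = 0\<close> \<open>d = 0\<close> by (intro complex_structure_pair_independent[OF J \<open>v \<noteq> 0\<close>]) simp
  ultimately show ?thesis by simp
qed

lemma UNIV_4: "(UNIV::4 set) = {0,1,2,3}"
proof -
  have "x \<in> {0,1,2,3}" for x :: 4
  proof (cases x rule: bit0_cases)
    case (of_int z)
    then have "z = 0 \<or> z = 1 \<or> z = 2 \<or> z = 3" by auto
    then show ?thesis using of_int by auto
  qed
  then show ?thesis by auto
qed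

lemma span_pair_ne_UNIV:
  fixes v w :: "'a::euclidean_space"
  assumes "2 < DIM('a)"
  shows "span {v, w} \<noteq> UNIV"
proof
  assume "span {v, w} = UNIV"
  then have "DIM('a) = dim (span {v, w})"
    by simp
  also have "\<dots> \<le> card {v, w}"
    by (rule dim_le_card) auto
  also have "\<dots> \<le> 2"
    by (simp add: card_insert_if)
  finally show False
    using assms by simp
qed

lemma complex_structure_basis:
  fixes J :: "real^4 \<Rightarrow> real^4"
  assumes J: "linear J" "\<And>w. J (J w) = - w"
  obtains v v' where "\<And>w. \<exists>a b c d. w = a *\<^sub>R v + b *\<^sub>R J v + c *\<^sub>R v' + d *\<^sub>R J v'"
proof -
  define v :: "real^4" where "v = axis 0 1"
  have "v \<noteq> 0" unfolding v_def by simp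
  have "span {v, J v} \<noteq> UNIV"
    by (rule span_pair_ne_UNIV) simp
  then obtain v' where v': "v' \<notin> span {v, J v}" by auto
  define Psi :: "real^4 \<Rightarrow> real^4" where
    "Psi c = c $ 0 *\<^sub>R v + c $ 1 *\<^sub>R J v + c $ 2 *\<^sub>R v' + c $ 3 *\<^sub>R J v'" for c
  have "linear Psi"
    by (rule linearI) (simp_all add: Psi_def algebra_simps)
  moreover have "inj Psi"
  proof -
    have "c = 0" if "Psi c = 0" for c
    proof -
      have zeros: "c $ 0 = 0 \<and> c $ 1 = 0 \<and> c $ 2 = 0 \<and> c $ 3 = 0"
        using that unfolding Psi_def by (rule complex_structure_quadruple_independent[OF J \<open>v \<noteq> 0\<close> v'])
      have cases4: "i = 0 \<or> i = 1 \<or> i = 2 \<or> i = 3" for i :: 4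
        using UNIV_4 by blast
      have "c $ i = 0" for i
        using cases4[of i] zeros by (elim disjE) simp_all
      then show "c = 0"
        by (simp add: Finite_Cartesian_Product.vec_eq_iff)
    qed
    then show ?thesis by (simp add: linear_injective_0[OF \<open>linear Psi\<close>])
  qed
  ultimately have "surj Psi"
    by (intro linear_injective_imp_surjective) simp_all
  show ?thesis
  proof (rule that)
    fix w
    from \<open>surj Psi\<close> obtain c where "w = Psi c"
      by (rule surjE)
    then show "\<exists>a b c d. w = a *\<^sub>R v + b *\<^sub>R J v + c *\<^sub>R v' + d *\<^sub>R J v'"
      unfolding Psi_def by blast
  qed
qed

text \<open>The representation would be complex linear on $\mathbb{C}^2$, hence determined by the
  images of a complex basis: an injection of $\mathbb{R}^{10}$ into $\mathbb{R}^8$.\<close>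

lemma no_commuting_complex_structure:
  fixes Ts :: "4 \<Rightarrow> 10 \<Rightarrow> 4 \<Rightarrow> real"
  assumes faithful: "\<And>x. fmat_comb (spin_gens Ts) x = (\<lambda>a b. 0) \<Longrightarrow> x = 0"
    and J: "linear J" "\<And>w. J (J w) = - w"
    and comm: "\<And>i w. J (spin_act Ts i w) = spin_act Ts i (J w)"
  shows False
proof -
  obtain v v' where basis: "\<And>w. \<exists>a b c d. w = a *\<^sub>R v + b *\<^sub>R J v + c *\<^sub>R v' + d *\<^sub>R J v'"
    using complex_structure_basis[OF J] by blast
  define rep where "rep x = fmat_apply (fmat_comb (spin_gens Ts) x)" for x
  have rep_eq: "rep x w = (\<Sum>i\<in>UNIV. x $ i *\<^sub>R spin_act Ts i w)" for x w
    unfolding rep_def fmat_apply_comb spin_act_eq_fmat_apply ..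
  have rep_J: "rep x (J w) = J (rep x w)" for x w
    unfolding rep_eq linear_sum[OF J(1)] linear_scale[OF J(1)] comm ..
  define Phi where "Phi x = (rep x v, rep x v')" for x
  have "linear Phi"
    by (rule linearI) (simp_all add: Phi_def rep_eq algebra_simps scaleR_sum_right sum.distrib)
  moreover have "inj Phi"
  proof -
    have "x = 0" if "Phi x = 0" for x
    proof -
      have "rep x v = 0" "rep x v' = 0"
        using that unfolding Phi_def by (simp_all add: zero_prod_def)
      have "rep x w = 0" for w
      proof -
        obtain a b c d where "w = a *\<^sub>R v + b *\<^sub>R J v + c *\<^sub>R v' + d *\<^sub>R J v'"
          using basis by blast
        then show ?thesis
          using \<open>rep x v = 0\<close> \<open>rep x v' = 0\<close> linear_fmat_apply[of "fmat_comb (spin_gens Ts) x"]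
          by (simp add: linear_add linear_scale rep_J linear_0[OF J(1)] flip: rep_def)
      qed
      then show "x = 0"
        by (intro faithful fmat_eqI) (simp add: rep_def fmat_apply_zero_mat)
    qed
    then show ?thesis by (simp add: linear_injective_0[OF \<open>linear Phi\<close>])
  qed
  ultimately have "dim (range Phi) = dim (UNIV :: (real^10) set)"
    by (intro dim_image_eq) (auto simp: inj_on_def dest: injD)
  moreover have "dim (range Phi) \<le> 8"
    using dim_subset_UNIV[of "range Phi"] by simp
  ultimately show False by simp
qed

text \<open>For a complex eigenvalue $\alpha + i\beta$ of $N$ with $\beta \neq 0$, the operator
  $(N - \alpha)^2 + \beta^2$ commutes with the representation and vanishes on a nonzero vector, so
  it is zero and $(N - \alpha)/\beta$ is a commuting complex structure.\<close>

lemma commutant_eigenvalues_real: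
  fixes Ts :: "4 \<Rightarrow> 10 \<Rightarrow> 4 \<Rightarrow> real"
  assumes irr: "irreducible_rep Ts"
    and faithful: "\<And>x. fmat_comb (spin_gens Ts) x = (\<lambda>a b. 0) \<Longrightarrow> x = 0"
    and comm: "\<And>i. fmat_mult N (spin_gens Ts i) = fmat_mult (spin_gens Ts i) N"
    and nz: "u \<noteq> 0 \<or> w \<noteq> 0"
    and Nu: "fmat_apply N u = \<alpha> *\<^sub>R u - \<beta> *\<^sub>R w" and Nw: "fmat_apply N w = \<beta> *\<^sub>R u + \<alpha> *\<^sub>R w"
  shows "\<beta> = 0"
proof (rule ccontr)
  assume "\<beta> \<noteq> 0"
  have comm_apply: "fmat_apply N (spin_act Ts i x) = spin_act Ts i (fmat_apply N x)" for i x
    using comm fmat_commute_iff_apply unfolding spin_act_eq_fmat_apply by blast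
  define Q where "Q = (\<lambda>a b. fmat_mult N N a b + fmat_scalar (\<alpha> * \<alpha> + \<beta> * \<beta>) a b - 2 * \<alpha> * N a b)"
  have Q_apply: "fmat_apply Q x
      = fmat_apply N (fmat_apply N x) + (\<alpha> * \<alpha> + \<beta> * \<beta>) *\<^sub>R x - (2 * \<alpha>) *\<^sub>R fmat_apply N x" for x
    unfolding Q_def fmat_apply_minus fmat_apply_plus fmat_apply_times fmat_apply_scalar fmat_apply_mult ..
  have "fmat_mult Q (spin_gens Ts i) = fmat_mult (spin_gens Ts i) Q" for i
    unfolding fmat_commute_iff_apply Q_apply spin_act_eq_fmat_apply[symmetric] comm_apply
    by (simp add: spin_act_eq_fmat_apply fmat_apply_add fmat_apply_diff fmat_apply_scale)
  moreover have "fmat_apply Q u = 0 *\<^sub>R u" "fmat_apply Q w = 0 *\<^sub>R w"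
    unfolding Q_apply Nu Nw
    by (simp_all add: fmat_apply_add fmat_apply_diff fmat_apply_scale Nu Nw
        Finite_Cartesian_Product.vec_eq_iff algebra_simps)
  ultimately have "Q = fmat_scalar 0"
    using nz commuting_eigenvector_imp_scalar[OF irr] by metis
  then have Q_zero: "fmat_apply N (fmat_apply N x) = (2 * \<alpha>) *\<^sub>R fmat_apply N x - (\<alpha> * \<alpha> + \<beta> * \<beta>) *\<^sub>R x" for x
    using Q_apply[of x] by (simp add: fmat_apply_scalar algebra_simps)
  define J where "J x = (1 / \<beta>) *\<^sub>R (fmat_apply N x - \<alpha> *\<^sub>R x)" for x
  have "linear J"
    unfolding J_def by (rule linearI) (simp_all add: fmat_apply_add fmat_apply_scale algebra_simps)
  moreover have "J (spin_act Ts i x) = spin_act Ts i (J x)" for i x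
    unfolding J_def comm_apply by (simp add: spin_act_eq_fmat_apply fmat_apply_diff fmat_apply_scale)
  moreover have "J (J x) = - x" for x
    using \<open>\<beta> \<noteq> 0\<close>
    by (simp add: J_def fmat_apply_diff fmat_apply_scale Q_zero Finite_Cartesian_Product.vec_eq_iff
        algebra_simps field_simps)
  ultimately show False
    using no_commuting_complex_structure[OF faithful] by blast
qed

lemma commutant_is_scalar:
  fixes Ts :: "4 \<Rightarrow> 10 \<Rightarrow> 4 \<Rightarrow> real"
  assumes irr: "irreducible_rep Ts"
    and faithful: "\<And>x. fmat_comb (spin_gens Ts) x = (\<lambda>a b. 0) \<Longrightarrow> x = 0"
    and comm: "\<And>i. fmat_mult N (spin_gens Ts i) = fmat_mult (spin_gens Ts i) N"
  obtains c where "N = fmat_scalar c"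
proof -
  obtain u w :: "real^4" and \<alpha> \<beta> where nz: "u \<noteq> 0 \<or> w \<noteq> 0"
    and Nu: "fmat_apply N u = \<alpha> *\<^sub>R u - \<beta> *\<^sub>R w" and Nw: "fmat_apply N w = \<beta> *\<^sub>R u + \<alpha> *\<^sub>R w"
    using fmat_real_invariant_plane[of N] by blast
  have "\<beta> = 0"
    using commutant_eigenvalues_real[OF irr faithful comm nz Nu Nw] .
  then show ?thesis
    using nz commuting_eigenvector_imp_scalar[OF irr comm] Nu Nw that by auto
qed


section \<open>Derivations of the spinor representation\<close>

lemma Mder_eq_bracket:
  "Mder Ms Mv Ts a i b
     = fmat_bracket Ms (spin_gens Ts i) a b - fmat_comb (spin_gens Ts) ((\<chi> k j. Mv k j) *v axis i 1) a b"
  unfolding Mder_def fmat_bracket_def fmat_mult_def fmat_comb_def spin_gens_def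
  by (simp add: matrix_vector_mult_def axis_def mult_if_zero_right sum.delta)

lemma fmat_comb_matrix_vector:
  "fmat_comb A (M *v x) a b = (\<Sum>i\<in>UNIV. x $ i * fmat_comb A (M *v axis i 1) a b)"
proof -
  have "fmat_comb A (M *v x) a b = (\<Sum>k\<in>UNIV. \<Sum>i\<in>UNIV. x $ i * (M $ k $ i * A k a b))"
    unfolding fmat_comb_def matrix_vector_mult_def
    by (simp add: sum_distrib_left sum_distrib_right algebra_simps)
  also have "\<dots> = (\<Sum>i\<in>UNIV. \<Sum>k\<in>UNIV. x $ i * (M $ k $ i * A k a b))"
    by (rule sum.swap)
  also have "\<dots> = (\<Sum>i\<in>UNIV. x $ i * fmat_comb A (M *v axis i 1) a b)"
    unfolding fmat_comb_def matrix_vector_mult_def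
    by (simp add: axis_def mult_if_zero_right sum.delta sum_distrib_left)
  finally show ?thesis .
qed

lemma Mder_eq_0_iff:
  "(\<forall>a i b. Mder Ms Mv Ts a i b = 0)
     \<longleftrightarrow> (\<forall>x. fmat_bracket Ms (fmat_comb (spin_gens Ts) x)
               = fmat_comb (spin_gens Ts) ((\<chi> k j. Mv k j) *v x))"
proof
  assume "\<forall>a i b. Mder Ms Mv Ts a i b = 0"
  then have gens: "fmat_bracket Ms (spin_gens Ts i) a b
      = fmat_comb (spin_gens Ts) ((\<chi> k j. Mv k j) *v axis i 1) a b" for a i b
    by (simp add: Mder_eq_bracket)
  show "\<forall>x. fmat_bracket Ms (fmat_comb (spin_gens Ts) x) = fmat_comb (spin_gens Ts) ((\<chi> k j. Mv k j) *v x)"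
  proof (intro allI ext)
    fix x a b
    show "fmat_bracket Ms (fmat_comb (spin_gens Ts) x) a b = fmat_comb (spin_gens Ts) ((\<chi> k j. Mv k j) *v x) a b"
      unfolding fmat_bracket_comb_right gens fmat_comb_matrix_vector[of _ _ x] ..
  qed
next
  assume h: "\<forall>x. fmat_bracket Ms (fmat_comb (spin_gens Ts) x) = fmat_comb (spin_gens Ts) ((\<chi> k j. Mv k j) *v x)"
  show "\<forall>a i b. Mder Ms Mv Ts a i b = 0"
  proof (intro allI)
    fix a i b
    have "fmat_bracket Ms (spin_gens Ts i) = fmat_comb (spin_gens Ts) ((\<chi> k j. Mv k j) *v axis i 1)"
      using h[rule_format, of "axis i 1"] unfolding fmat_comb_axis .
    then show "Mder Ms Mv Ts a i b = 0"
      unfolding Mder_eq_bracket by simp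
  qed
qed

lemma scalar_plus_comb_eq:
  "(\<forall>a b. Ms a b = c * (if a = b then 1 else 0) + (\<Sum>k\<in>UNIV. bv k * Ts a k b))
     \<longleftrightarrow> Ms = (\<lambda>a b. fmat_scalar c a b + fmat_comb (spin_gens Ts) (\<chi> k. bv k) a b)"
  unfolding fmat_scalar_def fmat_comb_def spin_gens_def by (simp add: fun_eq_iff)

lemma ad_mat_entries_eq:
  "(\<forall>i j. Mv i j = (\<Sum>k\<in>UNIV. bv k * Tv i k j)) \<longleftrightarrow> (\<chi> k j. Mv k j) = ad_mat Tv (\<chi> k. bv k)"
  unfolding ad_mat_def by (simp add: Finite_Cartesian_Product.vec_eq_iff)

lemma Mder_eq_0_if_inner:
  assumes "is_rep Tv Ts"
    and "Ms = (\<lambda>a b. fmat_scalar c a b + fmat_comb (spin_gens Ts) x a b)" and "(\<chi> k j. Mv k j) = ad_mat Tv x"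
  shows "\<forall>a i b. Mder Ms Mv Ts a i b = 0"
  unfolding Mder_eq_0_iff assms(2,3)
  by (simp add: fmat_bracket_plus_left fmat_bracket_scalar_left lie_bracket_def[symmetric]
      fmat_comb_lie_bracket[OF assms(1)[unfolded is_rep_iff_represents]])

locale so23_spin_rep = so23_basis Tv E
  for Tv :: "10 \<Rightarrow> 10 \<Rightarrow> 10 \<Rightarrow> real" and E :: "10 \<Rightarrow> 5 \<Rightarrow> 5 \<Rightarrow> real" +
  fixes Ts :: "4 \<Rightarrow> 10 \<Rightarrow> 4 \<Rightarrow> real"
  assumes rep: "is_rep Tv Ts" and irr: "irreducible_rep Ts"
begin

abbreviation rep :: "real^10 \<Rightarrow> 4 \<Rightarrow> 4 \<Rightarrow> real"
  where "rep \<equiv> fmat_comb (spin_gens Ts)"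

lemma rep_lie_bracket: "rep (lie_bracket Tv x y) = fmat_bracket (rep x) (rep y)"
  using fmat_comb_lie_bracket rep unfolding is_rep_iff_represents by blast

text \<open>The kernel is an ideal of the simple algebra, and not everything, since an irreducible
  representation on $\mathbb{R}^4$ is nonzero.\<close>

lemma rep_eq_zero:
  assumes "rep x = (\<lambda>a b. 0)"
  shows "x = 0"
proof (rule ccontr)
  assume "x \<noteq> 0"
  define K where "K = {x. rep x = (\<lambda>a b. 0)}"
  have "Real_Vector_Spaces.subspace K"
    unfolding Real_Vector_Spaces.subspace_def K_def by (simp add: fmat_comb_add fmat_comb_scale)
  moreover have "lie_bracket Tv z y \<in> K" if "y \<in> K" for z y
    using that rep_lie_bracket[of z y] unfolding K_def by (simp add: fmat_bracket_def fmat_mult_def)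
  ultimately have "K = UNIV"
    by (rule ideal_eq_UNIV[where x = x]) (simp_all add: K_def assms \<open>x \<noteq> 0\<close>)
  then have "rep (axis i 1) = (\<lambda>a b. 0)" for i
    unfolding K_def by blast
  then have Ts_zero: "Ts a i b = 0" for a i b
    unfolding fmat_comb_axis spin_gens_def by meson
  define W :: "(real^4) set" where "W = {v. v $ 0 = 0}"
  have "Real_Vector_Spaces.subspace W"
    unfolding Real_Vector_Spaces.subspace_def W_def by simp
  moreover have "\<forall>i. \<forall>v\<in>W. spin_act Ts i v \<in> W"
    unfolding W_def by (simp add: spin_act_def Ts_zero)
  ultimately have "W = {0} \<or> W = UNIV"
    using irr unfolding irreducible_rep_def by blast
  moreover have "axis 1 1 \<in> W" "axis 0 1 \<notin> W"
    unfolding W_def by (simp_all add: axis_def)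
  moreover have "axis 1 (1::real) \<noteq> 0"
    by simp
  ultimately show False
    by auto
qed

lemma rep_inj: "rep x = rep y \<Longrightarrow> x = y"
  using rep_eq_zero[of "x - y"] by (simp add: fmat_comb_diff fun_eq_iff)

lemma derivation_if_commutator:
  assumes D: "\<And>x. fmat_bracket Ms (rep x) = rep (D *v x)"
  shows "D *v lie_bracket Tv x y = lie_bracket Tv (D *v x) y + lie_bracket Tv x (D *v y)"
proof (rule rep_inj)
  have "rep (D *v lie_bracket Tv x y) = fmat_bracket Ms (fmat_bracket (rep x) (rep y))"
    unfolding D[symmetric] rep_lie_bracket ..
  also have "\<dots> = (\<lambda>a b. fmat_bracket (fmat_bracket Ms (rep x)) (rep y) a b
                       + fmat_bracket (rep x) (fmat_bracket Ms (rep y)) a b)"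
    by (rule fmat_bracket_derivation)
  also have "\<dots> = rep (lie_bracket Tv (D *v x) y + lie_bracket Tv x (D *v y))"
    unfolding fmat_comb_add rep_lie_bracket D ..
  finally show "rep (D *v lie_bracket Tv x y) = rep (lie_bracket Tv (D *v x) y + lie_bracket Tv x (D *v y))" .
qed

lemma inner_if_Mder_eq_0:
  assumes "\<forall>a i b. Mder Ms Mv Ts a i b = 0"
  obtains c x where "Ms = (\<lambda>a b. fmat_scalar c a b + rep x a b)" "(\<chi> k j. Mv k j) = ad_mat Tv x"
proof -
  define D :: "real^10^10" where "D = (\<chi> k j. Mv k j)"
  have "\<forall>x. fmat_bracket Ms (rep x) = rep (D *v x)"
    using assms unfolding Mder_eq_0_iff D_def .
  then have D: "fmat_bracket Ms (rep x) = rep (D *v x)" for x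
    by (rule spec)
  have "D *v lie_bracket Tv x y = lie_bracket Tv (D *v x) y + lie_bracket Tv x (D *v y)" for x y
    using D by (rule derivation_if_commutator)
  then obtain x where x: "D = ad_mat Tv x"
    by (rule derivation_is_ad)
  define N where "N = (\<lambda>a b. Ms a b - rep x a b)"
  have "fmat_bracket N (spin_gens Ts i) = (\<lambda>a b. 0)" for i
  proof -
    have "fmat_bracket N (spin_gens Ts i)
        = (\<lambda>a b. fmat_bracket Ms (rep (axis i 1)) a b - fmat_bracket (rep x) (rep (axis i 1)) a b)"
      unfolding N_def fmat_bracket_diff_left fmat_comb_axis ..
    also have "\<dots> = (\<lambda>a b. rep (D *v axis i 1) a b - rep (lie_bracket Tv x (axis i 1)) a b)"
      unfolding D rep_lie_bracket ..
    also have "\<dots> = (\<lambda>a b. 0)"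
      unfolding x lie_bracket_def by simp
    finally show ?thesis .
  qed
  then have commutes: "fmat_mult N (spin_gens Ts i) = fmat_mult (spin_gens Ts i) N" for i
    unfolding fmat_bracket_def by (simp add: fun_eq_iff)
  obtain c where "N = fmat_scalar c"
    using commutant_is_scalar[OF irr rep_eq_zero commutes] by blast
  then have "Ms = (\<lambda>a b. fmat_scalar c a b + rep x a b)"
    unfolding N_def by (simp add: fun_eq_iff algebra_simps)
  then show ?thesis
    using x unfolding D_def by (rule that)
qed

lemma Mder_eq_0_iff_inner:
  "(\<forall>a i b. Mder Ms Mv Ts a i b = 0)
     \<longleftrightarrow> (\<exists>c bv. Ms = (\<lambda>a b. fmat_scalar c a b + rep (\<chi> k. bv k) a b)
                   \<and> (\<chi> k j. Mv k j) = ad_mat Tv (\<chi> k. bv k))"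
proof
  assume "\<forall>a i b. Mder Ms Mv Ts a i b = 0"
  then obtain c x where "Ms = (\<lambda>a b. fmat_scalar c a b + rep x a b)" "(\<chi> k j. Mv k j) = ad_mat Tv x"
    by (rule inner_if_Mder_eq_0)
  then show "\<exists>c bv. Ms = (\<lambda>a b. fmat_scalar c a b + rep (\<chi> k. bv k) a b)
                   \<and> (\<chi> k j. Mv k j) = ad_mat Tv (\<chi> k. bv k)"
    by (intro exI[of _ c] exI[of _ "vec_nth x"]) simp
next
  assume "\<exists>c bv. Ms = (\<lambda>a b. fmat_scalar c a b + rep (\<chi> k. bv k) a b)
                   \<and> (\<chi> k j. Mv k j) = ad_mat Tv (\<chi> k. bv k)"
  then obtain c bv where "Ms = (\<lambda>a b. fmat_scalar c a b + rep (\<chi> k. bv k) a b)"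
    "(\<chi> k j. Mv k j) = ad_mat Tv (\<chi> k. bv k)"
    by blast
  then show "\<forall>a i b. Mder Ms Mv Ts a i b = 0"
    by (rule Mder_eq_0_if_inner[OF rep])
qed

end

theorem mainTheorem13:
  fixes Tv :: "10 \<Rightarrow> 10 \<Rightarrow> 10 \<Rightarrow> real"
    and Ts :: "4 \<Rightarrow> 10 \<Rightarrow> 4 \<Rightarrow> real"
    and Ms :: "4 \<Rightarrow> 4 \<Rightarrow> real"
    and Mv :: "10 \<Rightarrow> 10 \<Rightarrow> real"
  assumes "so23_structure_constants Tv"
    and "is_rep Tv Ts"
    and "irreducible_rep Ts"
  shows "(\<forall>a i b. Mder Ms Mv Ts a i b = 0) \<longleftrightarrow>
         (\<exists>(c::real) (bv::10 \<Rightarrow> real).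
            (\<forall>a b. Ms a b = c * (if a = b then 1 else 0) + (\<Sum>k\<in>UNIV. bv k * Ts a k b)) \<and>
            (\<forall>i j. Mv i j = (\<Sum>k\<in>UNIV. bv k * Tv i k j)))"
proof -
  obtain E where "so23_basis Tv E"
    using assms(1) unfolding so23_structure_constants_def so23_basis_def represents_def
      mat5_mult_eq_fmat_mult fmat_bracket_def by blast
  then interpret so23_spin_rep Tv E Ts
    by (rule so23_spin_rep.intro) (rule so23_spin_rep_axioms.intro[OF assms(2,3)])
  show ?thesis
    unfolding scalar_plus_comb_eq ad_mat_entries_eq by (rule Mder_eq_0_iff_inner)
qed

end
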